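(* There exist absolute constants $C,c>0$ such that for all $\varepsilon\in(0,1/2)$ and $\delta\in(0,1/10)$ there is a positive integer $t\le C\log^5(1/\delta)/\varepsilon^6$ with the following property: for every $n\ge c\ln^{10}(1/\delta)/\varepsilon^{10}$ for which $t$-regular graphs on $n$ nodes exist, there is an (unrestricted) $(\varepsilon,\delta)$-LNDP algorithm $\mathcal{A}$ on $n$-node graphs with outputs in $\{\text{starpartite},\text{regular}\}$ such that \[ \Pr_{G\sim\mathcal{G}^{star}_t}[\mathcal{A}(G)=\text{starpartite}]\ge\frac23\quad\text{and}\quad\Pr_{G\sim\mathcal{G}^{reg}_t}[\mathcal{A}(G)=\text{regular}]\ge\frac23. \]
   Context: Graphs are simple and undirected on node set $[n]$; $N_i^G$ is the neighborhood of node $i$. For $T\subseteq[n]$, the starpartite graph $S_T$ has edge set $\{\{i,j\}:i\in T,j\in[n],i\ne j\}$; it is $t$-starpartite if $|T|=t$. $\mathcal{G}^{reg}_t$ is the uniform distribution over $t$-regular graphs on $[n]$, and $\mathcal{G}^{star}_t$ the uniform distribution over $t$-starpartite graphs on $[n]$. Two graphs on $[n]$ are node neighbors if they differ only in edges incident to a single node. Random variables $R_1,R_2$ are $(\varepsilon,\delta)$-indistinguishable if for every event $Y$, $\Pr[R_1\in Y]\le e^\varepsilon\Pr[R_2\in Y]+\delta$ and symmetrically. An algorithm $\mathcal{A}$ on $n$-node graphs is (noninteractive) $(\varepsilon,\delta)$-LNDP if there exist a distribution over public random strings $\rho$, local randomizers $\mathcal{R}_{1,\rho},\dots,\mathcal{R}_{n,\rho}$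 (with independent internal randomness), and a postprocessing $\mathcal{P}$ with $\mathcal{A}(G)=\mathcal{P}(\mathcal{R}_{1,\rho}(N_1^G),\dots,\mathcal{R}_{n,\rho}(N_n^G))$, such that for every fixed $\rho$ and every node-neighboring $G,G'$ the randomizer output vectors on $G$ and $G'$ are $(\varepsilon,\delta)$-indistinguishable. "Unrestricted" means randomizers may depend on the whole set $N_i^G$. *)

theory Defs
  imports "HOL-Probability.Probability"
begin

(* Graphs on node set [n] = {0..<n}: a graph is a set of 2-element edges {i,j}. *)
type_synonym graph = "nat set set"

definition simple_graph :: "nat \<Rightarrow> graph \<Rightarrow> bool" where
  "simple_graph n G \<longleftrightarrow> G \<subseteq> {{i, j} | i j. i < n \<and> j < n \<and> i \<noteq> j}"

definition nbhd :: "graph \<Rightarrow> nat \<Rightarrow> nat set" where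
  "nbhd G i = {j. {i, j} \<in> G}"

definition regular_graphs :: "nat \<Rightarrow> nat \<Rightarrow> graph set" where
  "regular_graphs n t = {G. simple_graph n G \<and> (\<forall>i<n. card (nbhd G i) = t)}"

definition starpartite :: "nat \<Rightarrow> nat set \<Rightarrow> graph" where
  "starpartite n T = {{i, j} | i j. i \<in> T \<and> j < n \<and> i \<noteq> j}"

definition starpartite_graphs :: "nat \<Rightarrow> nat \<Rightarrow> graph set" where
  "starpartite_graphs n t = {starpartite n T | T. T \<subseteq> {..<n} \<and> card T = t}"

definition node_neighbors :: "nat \<Rightarrow> graph \<Rightarrow> graph \<Rightarrow> bool" where
  "node_neighbors n G G' \<longleftrightarrow> simple_graph n G \<and> simple_graph n G' \<and>
     (\<exists>v<n. \<forall>e. v \<notin> e \<longrightarrow> (e \<in> G \<longleftrightarrow> e \<in> G'))"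

definition indist :: "real \<Rightarrow> real \<Rightarrow> 'a pmf \<Rightarrow> 'a pmf \<Rightarrow> bool" where
  "indist eps delta X Y \<longleftrightarrow>
     (\<forall>A. measure_pmf.prob X A \<le> exp eps * measure_pmf.prob Y A + delta) \<and>
     (\<forall>A. measure_pmf.prob Y A \<le> exp eps * measure_pmf.prob X A + delta)"

datatype label = Starpartite | Regular

(* R rho i N : local randomizer of node i under public string rho, applied to its
   neighbourhood N (unrestricted: may depend on the whole set).
   The joint output vector: independent randomizers for i < n (value 0 for i >= n). *)
definition rand_outputs ::
  "nat \<Rightarrow> (nat \<Rightarrow> nat \<Rightarrow> nat set \<Rightarrow> nat pmf) \<Rightarrow> nat \<Rightarrow> graph \<Rightarrow> (nat \<Rightarrow> nat) pmf" where
  "rand_outputs n R rho G = Pi_pmf {..<n} 0 (\<lambda>i. R rho i (nbhd G i))"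

definition LNDP ::
  "nat \<Rightarrow> real \<Rightarrow> real \<Rightarrow> nat pmf \<Rightarrow> (nat \<Rightarrow> nat \<Rightarrow> nat set \<Rightarrow> nat pmf) \<Rightarrow> bool" where
  "LNDP n eps delta Rho R \<longleftrightarrow>
     (\<forall>rho \<in> set_pmf Rho. \<forall>G G'. node_neighbors n G G' \<longrightarrow>
        indist eps delta (rand_outputs n R rho G) (rand_outputs n R rho G'))"

definition alg_out ::
  "nat \<Rightarrow> nat pmf \<Rightarrow> (nat \<Rightarrow> nat \<Rightarrow> nat set \<Rightarrow> nat pmf) \<Rightarrow> ((nat \<Rightarrow> nat) \<Rightarrow> 'o) \<Rightarrow> graph \<Rightarrow> 'o pmf" where
  "alg_out n Rho R P G = bind_pmf Rho (\<lambda>rho. map_pmf P (rand_outputs n R rho G))"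

end

(*
  Public randomness chooses S = 2rm slots, each a uniformly random node, split into r groups
  of two halves of m slots, together with independent random signs g(k, u) for every group k
  and node u. The node in a slot of group k reports a randomized-response bit with bias
  \<beta> * clip(sum of g(k, u) over its neighbours u, divided by D). Changing the edges at one node
  moves the clipped sum of that node by at most 2 and of every other sampled node by at most
  1/D, so with D = S the reports are (6\<beta>, 0)-indistinguishable.

  The statistic is the sum over groups of the product of the two half-averages of the bits.
  In a starpartite graph every sampled node outside T has neighbourhood T, so all slots of a
  group share one clipped sum; for t = D^2 its square has mean at least 1/4 by the second and
  fourth moments of a sum of random signs, and the statistic has mean at least r\<beta>^2/4. In a
  regular graph nodes with disjoint neighbourhoods have independent centred clipped sums, and
  two random nodes have overlapping neighbourhoods with probability at most t^2/n, so the mean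
  is negligible. The variance is O(r\<beta>^4), so Chebyshev's inequality with r = 2048 separates the
  two cases at the threshold r\<beta>^2/8; repeated slots and slots hitting T cost S^2/n and S t/n.
*)
theory Submission
  imports Defs
begin

section \<open>Expectations under finite and product distributions\<close>

lemma integral_bind_pmf_bounded:
  fixes f :: "'b \<Rightarrow> real"
  assumes "\<And>y. \<bar>f y\<bar> \<le> B"
  shows "measure_pmf.expectation (bind_pmf p q) f =
         measure_pmf.expectation p (\<lambda>x. measure_pmf.expectation (q x) f)"
  unfolding measure_pmf_bind
  by (rule integral_bind[where K="count_space UNIV" and B=B and B'=1])
     (use assms in \<open>auto simp: measure_pmf.emeasure_space_1 prob_space_imp_subprob_space
        space_subprob_algebra measure_pmf.subprob_space_axioms\<close>)

lemma prob_bind_pmf: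
  "measure_pmf.prob (bind_pmf p f) A = measure_pmf.expectation p (\<lambda>x. measure_pmf.prob (f x) A)"
  using integral_bind_pmf_bounded[of "indicator A" 1 p f] by (simp add: indicator_def)

lemma integral_pair_pmf_bounded:
  fixes F :: "'a \<times> 'b \<Rightarrow> real"
  assumes "\<And>z. \<bar>F z\<bar> \<le> B"
  shows "measure_pmf.expectation (pair_pmf p q) F =
         measure_pmf.expectation p (\<lambda>x. measure_pmf.expectation q (\<lambda>y. F (x, y)))"
  unfolding pair_pmf_def
  by (subst integral_bind_pmf_bounded[OF assms])
     (intro Bochner_Integration.integral_cong refl, subst integral_bind_pmf_bounded[OF assms], simp)

lemma integral_pair_pmf_mult:
  fixes F :: "'a \<Rightarrow> real" and H :: "'b \<Rightarrow> real"
  assumes "\<And>y. \<bar>F y\<bar> \<le> BF" and "\<And>z. \<bar>H z\<bar> \<le> BH"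
  shows "measure_pmf.expectation (pair_pmf p q) (\<lambda>z. F (fst z) * H (snd z)) =
         measure_pmf.expectation p F * measure_pmf.expectation q H"
proof -
  have "\<bar>F y * H z\<bar> \<le> BF * BH" for y z
    using assms(1)[of y] assms(2)[of z] by (simp add: abs_mult mult_mono')
  then have "measure_pmf.expectation (pair_pmf p q) (\<lambda>z. F (fst z) * H (snd z)) =
             measure_pmf.expectation p (\<lambda>x. F x * measure_pmf.expectation q H)"
    by (subst integral_pair_pmf_bounded) auto
  then show ?thesis by simp
qed

lemma integral_Pi_pmf_mult_disjoint:
  fixes F H :: "('i \<Rightarrow> 'v) \<Rightarrow> real"
  assumes "finite A" and "U \<subseteq> A" and "U \<inter> V = {}"
    and F_dep: "\<And>x x'. (\<And>i. i \<in> U \<Longrightarrow> x i = x' i) \<Longrightarrow> F x = F x'"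
    and H_dep: "\<And>x x'. (\<And>i. i \<in> V \<Longrightarrow> x i = x' i) \<Longrightarrow> H x = H x'"
    and "\<And>y. \<bar>F y\<bar> \<le> BF" and "\<And>y. \<bar>H y\<bar> \<le> BH"
  shows "measure_pmf.expectation (Pi_pmf A d p) (\<lambda>x. F x * H x) =
         measure_pmf.expectation (Pi_pmf A d p) F * measure_pmf.expectation (Pi_pmf A d p) H"
proof -
  let ?merge = "\<lambda>(f, g) i. if i \<in> U then f i else g i"
  have "Pi_pmf A d p = Pi_pmf (U \<union> (A - U)) d p"
    using \<open>U \<subseteq> A\<close> by (simp add: Un_absorb1)
  also have "\<dots> = map_pmf ?merge (pair_pmf (Pi_pmf U d p) (Pi_pmf (A - U) d p))"
    using assms(1,2) by (intro Pi_pmf_union) (auto intro: finite_subset)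
  finally have split: "Pi_pmf A d p = \<dots>" .
  have F_merge: "F (?merge z) = F (fst z)" for z
    by (cases z) (auto intro!: F_dep)
  have H_merge: "H (?merge z) = H (snd z)" for z
    using \<open>U \<inter> V = {}\<close> by (cases z) (auto intro!: H_dep)
  show ?thesis
    unfolding split
    using integral_pair_pmf_mult[OF assms(6,7), of "Pi_pmf U d p" "Pi_pmf (A - U) d p"]
    by (simp add: F_merge H_merge del: split_paired_all)
qed

lemma integral_Pi_pmf_component:
  fixes f :: "'v \<Rightarrow> real"
  assumes "finite A" and "i \<in> A"
  shows "measure_pmf.expectation (Pi_pmf A d p) (\<lambda>x. f (x i)) = measure_pmf.expectation (p i) f"
proof -
  have "measure_pmf.expectation (Pi_pmf A d p) (\<lambda>x. f (x i)) =
        measure_pmf.expectation (map_pmf (\<lambda>x. x i) (Pi_pmf A d p)) f"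
    by simp
  then show ?thesis
    using Pi_pmf_component[OF assms(1), of i d p] assms(2) by simp
qed

lemma integral_pmf_mono_on_support:
  fixes f g :: "'a \<Rightarrow> real"
  assumes "finite (set_pmf p)" and "\<And>x. x \<in> set_pmf p \<Longrightarrow> g x \<le> f x"
  shows "measure_pmf.expectation p g \<le> measure_pmf.expectation p f"
  using assms
  by (intro integral_mono_AE) (auto simp: AE_measure_pmf_iff integrable_measure_pmf_finite)

lemma integral_pmf_cong_on_support:
  fixes f g :: "'a \<Rightarrow> real"
  assumes "\<And>x. x \<in> set_pmf p \<Longrightarrow> f x = g x"
  shows "measure_pmf.expectation p f = measure_pmf.expectation p g"
  using assms by (intro integral_cong_AE) (auto simp: AE_measure_pmf_iff)

lemma prob_pmf_not: "measure_pmf.prob p {x. \<not> Q x} = 1 - measure_pmf.prob p {x. Q x}"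
  using measure_pmf.prob_compl[of "{x. Q x}" p] by (simp add: Compl_eq_Diff_UNIV[symmetric] Collect_neg_eq)

lemma prob_le_of_pmf_le:
  assumes "\<And>x. pmf X x \<le> c * pmf Y x" and "0 \<le> c"
  shows "measure_pmf.prob X A \<le> c * measure_pmf.prob Y A"
proof -
  have "measure_pmf.prob X A = infsetsum (pmf X) A"
    by (rule measure_pmf_conv_infsetsum)
  also have "\<dots> \<le> infsetsum (\<lambda>x. c * pmf Y x) A"
    using assms by (intro infsetsum_mono) (auto intro: abs_summable_on_cmult_right)
  also have "\<dots> = c * infsetsum (pmf Y) A"
    by (rule infsetsum_cmult_right) auto
  also have "\<dots> = c * measure_pmf.prob Y A"
    by (simp add: measure_pmf_conv_infsetsum)
  finally show ?thesis .
qed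

lemma prob_bind_pmf_of_set_ge:
  assumes "finite A" and "A \<noteq> {}" and "\<And>G. G \<in> A \<Longrightarrow> a \<le> measure_pmf.prob (f G) B"
  shows "a \<le> measure_pmf.prob (bind_pmf (pmf_of_set A) f) B"
proof -
  have "measure_pmf.expectation (pmf_of_set A) (\<lambda>_. a) \<le> measure_pmf.expectation (pmf_of_set A) (\<lambda>G. measure_pmf.prob (f G) B)"
    using assms by (intro integral_pmf_mono_on_support) auto
  then show ?thesis
    by (simp add: prob_bind_pmf)
qed

lemma integral_ge_of_failure_count:
  fixes f h b :: "'a \<Rightarrow> real"
  assumes "finite (set_pmf p)"
    and "\<And>x. x \<in> set_pmf p \<Longrightarrow> P x \<Longrightarrow> 1 - h x \<le> f x"
    and "\<And>x. x \<in> set_pmf p \<Longrightarrow> \<not> P x \<Longrightarrow> 1 \<le> b x"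
    and "\<And>x. 0 \<le> f x" and "\<And>x. 0 \<le> h x" and "\<And>x. 0 \<le> b x"
  shows "1 - measure_pmf.expectation p h - measure_pmf.expectation p b \<le> measure_pmf.expectation p f"
proof -
  have "1 - h x - b x \<le> f x" if "x \<in> set_pmf p" for x
    using assms(2-6)[of x] that by (cases "P x") force+
  then have "measure_pmf.expectation p (\<lambda>x. 1 - h x - b x) \<le> measure_pmf.expectation p f"
    by (rule integral_pmf_mono_on_support[OF assms(1)])
  then show ?thesis
    using assms(1) by (simp add: integrable_measure_pmf_finite)
qed

lemma prob_less_le_variance:
  fixes f :: "'a \<Rightarrow> real"
  assumes "\<And>x. \<bar>f x\<bar> \<le> B"
    and "measure_pmf.expectation p f = \<mu>"
    and "measure_pmf.expectation p (\<lambda>x. f x ^ 2) \<le> V + \<mu>\<^sup>2" and "\<tau> < \<mu>"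
  shows "measure_pmf.prob p {x. f x < \<tau>} \<le> V / (\<mu> - \<tau>)\<^sup>2"
proof -
  have "\<bar>f x ^ 2\<bar> \<le> B\<^sup>2" for x
    using power_mono[OF assms(1)[of x] abs_ge_zero, of 2] by (simp add: power_abs)
  then have square_integrable: "integrable (measure_pmf p) (\<lambda>x. f x ^ 2)"
    by (intro measure_pmf.integrable_const_bound[where B="B\<^sup>2"]) auto
  have integrable: "integrable (measure_pmf p) f"
    using assms(1) by (intro measure_pmf.integrable_const_bound[where B=B]) auto
  have "{x. f x < \<tau>} \<subseteq> {x \<in> space (measure_pmf p). \<bar>f x - \<mu>\<bar> \<ge> \<mu> - \<tau>}"
    by auto
  then have "measure_pmf.prob p {x. f x < \<tau>} \<le> measure_pmf.prob p {x \<in> space (measure_pmf p). \<bar>f x - \<mu>\<bar> \<ge> \<mu> - \<tau>}"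
    by (intro measure_pmf.finite_measure_mono) auto
  also have "\<dots> \<le> measure_pmf.variance p f / (\<mu> - \<tau>)\<^sup>2"
    using measure_pmf.Chebyshev_inequality[OF _ square_integrable, of "\<mu> - \<tau>"] assms(2,4) by simp
  also have "measure_pmf.variance p f = measure_pmf.expectation p (\<lambda>x. f x ^ 2) - \<mu>\<^sup>2"
    using measure_pmf.variance_eq[OF integrable square_integrable] assms(2) by simp
  also have "\<dots> \<le> V"
    using assms(3) by simp
  finally show ?thesis
    by (simp add: divide_right_mono)
qed

lemma sum_sum_split_diagonal:
  fixes F :: "'a \<Rightarrow> 'a \<Rightarrow> 'b :: comm_monoid_add"
  assumes "finite K"
  shows "(\<Sum>k\<in>K. \<Sum>l\<in>K. F k l) = (\<Sum>k\<in>K. F k k) + (\<Sum>k\<in>K. \<Sum>l\<in>K - {k}. F k l)"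
proof -
  have "(\<Sum>l\<in>K. F k l) = F k k + (\<Sum>l\<in>K - {k}. F k l)" if "k \<in> K" for k
    using assms that by (rule sum.remove)
  then show ?thesis
    by (simp add: sum.distrib[symmetric])
qed

section \<open>Sums of random signs\<close>

definition rad :: "bool \<Rightarrow> real" where
  "rad b = (if b then 1 else -1)"

definition rademacher_pmf :: "'i set \<Rightarrow> ('i \<Rightarrow> bool) pmf" where
  "rademacher_pmf I = Pi_pmf I False (\<lambda>_. bernoulli_pmf (1/2))"

lemma abs_rad [simp]: "\<bar>rad b\<bar> = 1"
  by (simp add: rad_def)

lemma finite_set_rademacher_pmf: "finite I \<Longrightarrow> finite (set_pmf (rademacher_pmf I))"
  by (simp add: rademacher_pmf_def set_Pi_pmf finite_PiE_dflt)

lemma integrable_rademacher_pmf [simp]: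
  "finite I \<Longrightarrow> integrable (measure_pmf (rademacher_pmf I)) (f :: _ \<Rightarrow> real)"
  by (rule integrable_measure_pmf_finite[OF finite_set_rademacher_pmf])

lemma abs_sum_rad_le: "\<bar>\<Sum>w\<in>W. rad (x w)\<bar> \<le> real (card W)"
  using sum_abs[of "\<lambda>w. rad (x w)" W] by simp

lemma integral_rad_mult_independent:
  assumes "finite I" and "a \<in> I" and "a \<notin> W" and "\<And>x. \<bar>H x\<bar> \<le> B"
    and "\<And>x x'. (\<And>i. i \<in> W \<Longrightarrow> x i = x' i) \<Longrightarrow> H x = H x'"
  shows "measure_pmf.expectation (rademacher_pmf I) (\<lambda>x. rad (x a) * H x) = 0"
proof -
  have "measure_pmf.expectation (rademacher_pmf I) (\<lambda>x. rad (x a)) =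
        measure_pmf.expectation (bernoulli_pmf (1/2)) rad"
    unfolding rademacher_pmf_def using assms(1,2) by (rule integral_Pi_pmf_component)
  also have "\<dots> = 0"
    by (simp add: rad_def)
  finally have "measure_pmf.expectation (rademacher_pmf I) (\<lambda>x. rad (x a)) = 0" .
  moreover have "measure_pmf.expectation (rademacher_pmf I) (\<lambda>x. rad (x a) * H x) =
    measure_pmf.expectation (rademacher_pmf I) (\<lambda>x. rad (x a)) * measure_pmf.expectation (rademacher_pmf I) H"
    unfolding rademacher_pmf_def
    by (rule integral_Pi_pmf_mult_disjoint[where U="{a}" and V=W and BF=1 and BH=B])
       (use assms(1-4) in simp_all, rule assms(5))
  ultimately show ?thesis
    by simp
qed

lemma integral_rad_mult_sum_power:
  assumes "finite I" and "a \<in> I" and "a \<notin> W" and "finite W"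
  shows "measure_pmf.expectation (rademacher_pmf I) (\<lambda>x. rad (x a) * (\<Sum>w\<in>W. rad (x w)) ^ k) = 0"
proof (rule integral_rad_mult_independent[OF assms(1-3)])
  show "\<bar>(\<Sum>w\<in>W. rad (x w)) ^ k\<bar> \<le> real (card W) ^ k" for x
    using power_mono[OF abs_sum_rad_le abs_ge_zero] by (simp add: power_abs)
  show "(\<Sum>w\<in>W. rad (x w)) ^ k = (\<Sum>w\<in>W. rad (x' w)) ^ k" if "\<And>i. i \<in> W \<Longrightarrow> x i = x' i" for x x'
    using that by (simp cong: sum.cong)
qed

lemma power_sign_add:
  fixes a x :: real
  assumes "a\<^sup>2 = 1"
  shows "(a + x) ^ 2 = 1 + 2 * (a * x) + x ^ 2"
    and "(a + x) ^ 4 = 1 + 4 * (a * x) + 6 * x ^ 2 + 4 * (a * x ^ 3) + x ^ 4"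
proof -
  have "a ^ 3 = a" and "a ^ 4 = 1"
    using assms by (simp_all add: power3_eq_cube power4_eq_xxxx power2_eq_square)
  have "(a + x) ^ 4 = a ^ 4 + 4 * (a ^ 3 * x) + 6 * (a\<^sup>2 * x ^ 2) + 4 * (a * x ^ 3) + x ^ 4"
    by (simp add: power4_eq_xxxx power3_eq_cube power2_eq_square algebra_simps)
  then show "(a + x) ^ 4 = 1 + 4 * (a * x) + 6 * x ^ 2 + 4 * (a * x ^ 3) + x ^ 4"
    using assms \<open>a ^ 3 = a\<close> \<open>a ^ 4 = 1\<close> by simp
  show "(a + x) ^ 2 = 1 + 2 * (a * x) + x ^ 2"
    using assms by (simp add: power2_sum algebra_simps)
qed

lemma rademacher_sum_moments:
  assumes "finite I" and "W \<subseteq> I"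
  shows "measure_pmf.expectation (rademacher_pmf I) (\<lambda>x. (\<Sum>w\<in>W. rad (x w)) ^ 2) = card W"
    and "measure_pmf.expectation (rademacher_pmf I) (\<lambda>x. (\<Sum>w\<in>W. rad (x w)) ^ 4) =
           3 * real (card W) ^ 2 - 2 * real (card W)"
proof -
  let ?E = "measure_pmf.expectation (rademacher_pmf I)"
  have "finite W"
    using assms finite_subset by blast
  from this \<open>W \<subseteq> I\<close>
  have "?E (\<lambda>x. (\<Sum>w\<in>W. rad (x w)) ^ 2) = card W \<and>
        ?E (\<lambda>x. (\<Sum>w\<in>W. rad (x w)) ^ 4) = 3 * real (card W) ^ 2 - 2 * real (card W)"
  proof (induction W rule: finite_induct)
    case empty
    then show ?case by simp
  next
    case (insert a W)
    define S where "S x = (\<Sum>w\<in>W. rad (x w))" for x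
    have "a \<in> I"
      using insert.prems by simp
    have IH: "?E (\<lambda>x. S x ^ 2) = card W" "?E (\<lambda>x. S x ^ 4) = 3 * real (card W) ^ 2 - 2 * real (card W)"
      using insert.IH insert.prems by (auto simp: S_def)
    have odd_terms: "?E (\<lambda>x. rad (x a) * S x) = 0" "?E (\<lambda>x. rad (x a) * S x ^ 3) = 0"
      using integral_rad_mult_sum_power[OF assms(1) \<open>a \<in> I\<close> insert.hyps(2,1), of 1]
        integral_rad_mult_sum_power[OF assms(1) \<open>a \<in> I\<close> insert.hyps(2,1), of 3]
      by (simp_all add: S_def)
    have rad_square: "(rad b)\<^sup>2 = 1" for b
      by (simp add: rad_def)
    have sum_insert: "(\<Sum>w\<in>insert a W. rad (x w)) = rad (x a) + S x" for x
      using insert.hyps by (simp add: S_def)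
    have "?E (\<lambda>x. (rad (x a) + S x) ^ 2) = 1 + 2 * ?E (\<lambda>x. rad (x a) * S x) + ?E (\<lambda>x. S x ^ 2)"
      unfolding power_sign_add(1)[OF rad_square] using assms(1) by simp
    moreover have "?E (\<lambda>x. (rad (x a) + S x) ^ 4) = 1 + 4 * ?E (\<lambda>x. rad (x a) * S x) +
        6 * ?E (\<lambda>x. S x ^ 2) + 4 * ?E (\<lambda>x. rad (x a) * S x ^ 3) + ?E (\<lambda>x. S x ^ 4)"
      unfolding power_sign_add(2)[OF rad_square] using assms(1) by simp
    moreover have "card (insert a W) = Suc (card W)"
      using insert.hyps by simp
    ultimately show ?case
      unfolding sum_insert odd_terms IH by (simp add: algebra_simps power2_eq_square)
  qed
  then show "?E (\<lambda>x. (\<Sum>w\<in>W. rad (x w)) ^ 2) = card W"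
    and "?E (\<lambda>x. (\<Sum>w\<in>W. rad (x w)) ^ 4) = 3 * real (card W) ^ 2 - 2 * real (card W)"
    by auto
qed

definition flip_on :: "'i set \<Rightarrow> ('i \<Rightarrow> bool) \<Rightarrow> 'i \<Rightarrow> bool" where
  "flip_on W x = (\<lambda>i. if i \<in> W then \<not> x i else x i)"

lemma flip_on_flip_on [simp]: "flip_on W (flip_on W x) = x"
  by (auto simp: flip_on_def)

lemma map_flip_on_rademacher_pmf:
  assumes "finite I" and "W \<subseteq> I"
  shows "map_pmf (flip_on W) (rademacher_pmf I) = rademacher_pmf I"
proof (rule pmf_eqI)
  fix y
  have "inj (flip_on W)"
    by (rule injI) (metis flip_on_flip_on)
  then have "pmf (map_pmf (flip_on W) (rademacher_pmf I)) (flip_on W (flip_on W y)) =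
             pmf (rademacher_pmf I) (flip_on W y)"
    by (rule pmf_map_inj')
  also have "\<dots> = pmf (rademacher_pmf I) y"
    using assms by (auto simp: rademacher_pmf_def pmf_Pi flip_on_def)
  finally show "pmf (map_pmf (flip_on W) (rademacher_pmf I)) y = pmf (rademacher_pmf I) y"
    by simp
qed

text \<open>Flipping the signs on \<open>W\<close> preserves the distribution and negates the sum.\<close>

lemma integral_odd_rademacher_sum:
  fixes \<phi> :: "real \<Rightarrow> real"
  assumes "finite I" and "W \<subseteq> I" and "\<And>z. \<phi> (- z) = - \<phi> z"
  shows "measure_pmf.expectation (rademacher_pmf I) (\<lambda>x. \<phi> (\<Sum>w\<in>W. rad (x w))) = 0"
proof -
  let ?F = "\<lambda>x. \<phi> (\<Sum>w\<in>W. rad (x w))"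
  have flip: "?F (flip_on W x) = - ?F x" for x
  proof -
    have "(\<Sum>w\<in>W. rad (flip_on W x w)) = - (\<Sum>w\<in>W. rad (x w))"
      unfolding sum_negf[symmetric] by (rule sum.cong) (auto simp: flip_on_def rad_def)
    then show ?thesis
      using assms(3) by simp
  qed
  have "measure_pmf.expectation (rademacher_pmf I) ?F =
        measure_pmf.expectation (map_pmf (flip_on W) (rademacher_pmf I)) ?F"
    by (simp only: map_flip_on_rademacher_pmf[OF assms(1,2)])
  also have "\<dots> = measure_pmf.expectation (rademacher_pmf I) (\<lambda>x. ?F (flip_on W x))"
    by (rule integral_map_pmf)
  also have "\<dots> = - measure_pmf.expectation (rademacher_pmf I) ?F"
    by (simp only: flip Bochner_Integration.integral_minus)
  finally show ?thesis
    by simp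
qed

section \<open>Clipping\<close>

definition clip :: "real \<Rightarrow> real" where
  "clip z = max (-1) (min 1 z)"

lemma clip_minus: "clip (- z) = - clip z"
  by (simp add: clip_def)

lemma abs_clip_le: "\<bar>clip z\<bar> \<le> 1"
  by (simp add: clip_def)

lemma abs_clip_diff_le: "\<bar>clip a - clip b\<bar> \<le> \<bar>a - b\<bar>"
  by (simp add: clip_def)

lemma clip_square_ge: "z\<^sup>2 - z ^ 4 / 4 \<le> clip z ^ 2"
proof (cases "\<bar>z\<bar> \<le> 1")
  case True
  then show ?thesis
    by (simp add: clip_def)
next
  case False
  then have "clip z = 1 \<or> clip z = -1"
    by (auto simp: clip_def)
  then have "clip z ^ 2 = 1"
    by auto
  moreover have "0 \<le> (z\<^sup>2 - 2)\<^sup>2"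
    by simp
  ultimately show ?thesis
    by (simp add: power2_eq_square power4_eq_xxxx algebra_simps)
qed

text \<open>With \<open>|W| = D\<^sup>2\<close> the normalised sum has variance one; the fourth moment
  bounds what clipping can lose.\<close>

lemma integral_clip_rademacher_sum_square_ge:
  assumes "finite I" and "W \<subseteq> I" and "D > 0" and "real (card W) = D\<^sup>2"
  shows "1/4 \<le> measure_pmf.expectation (rademacher_pmf I) (\<lambda>x. clip ((\<Sum>w\<in>W. rad (x w)) / D) ^ 2)"
proof -
  let ?E = "measure_pmf.expectation (rademacher_pmf I)"
  let ?S = "\<lambda>x. \<Sum>w\<in>W. rad (x w)"
  have "?E (\<lambda>x. (?S x / D)\<^sup>2 - (?S x / D) ^ 4 / 4) = ?E (\<lambda>x. ?S x ^ 2) / D\<^sup>2 - ?E (\<lambda>x. ?S x ^ 4) / (4 * D ^ 4)"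
    using assms(1) by (simp add: power_divide)
  also have "\<dots> = 1/4 + 1 / (2 * D\<^sup>2)"
    unfolding rademacher_sum_moments[OF assms(1,2)] assms(4)
    using assms(3) by (simp add: field_simps power2_eq_square power4_eq_xxxx)
  finally have "1/4 \<le> ?E (\<lambda>x. (?S x / D)\<^sup>2 - (?S x / D) ^ 4 / 4)"
    by simp
  also have "\<dots> \<le> ?E (\<lambda>x. clip (?S x / D) ^ 2)"
    using assms(1) by (intro integral_mono clip_square_ge) simp_all
  finally show ?thesis .
qed

section \<open>Neighbourhoods\<close>

lemma nbhd_subset: "simple_graph n G \<Longrightarrow> nbhd G i \<subseteq> {..<n}"
  by (auto simp: simple_graph_def nbhd_def doubleton_eq_iff)

lemma mem_nbhd_commute: "j \<in> nbhd G i \<longleftrightarrow> i \<in> nbhd G j"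
  by (simp add: nbhd_def insert_commute)

lemma nbhd_starpartite:
  assumes "T \<subseteq> {..<n}" and "i < n" and "i \<notin> T"
  shows "nbhd (starpartite n T) i = T"
proof
  show "nbhd (starpartite n T) i \<subseteq> T"
  proof
    fix j
    assume "j \<in> nbhd (starpartite n T) i"
    then obtain a b where "{i, j} = {a, b}" and "a \<in> T"
      by (auto simp: nbhd_def starpartite_def)
    then show "j \<in> T"
      using assms(3) by (auto simp: doubleton_eq_iff)
  qed
  show "T \<subseteq> nbhd (starpartite n T) i"
  proof
    fix j
    assume "j \<in> T"
    then have "{i, j} = {j, i}" and "j \<noteq> i"
      using assms(3) by auto
    then have "{i, j} \<in> starpartite n T"
      unfolding starpartite_def using \<open>j \<in> T\<close> assms(2) by blast
    then show "j \<in> nbhd (starpartite n T) i"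
      by (simp add: nbhd_def)
  qed
qed

definition nbhd_overlap :: "graph \<Rightarrow> nat \<Rightarrow> nat \<Rightarrow> real" where
  "nbhd_overlap G x y = (if nbhd G x \<inter> nbhd G y = {} then 0 else 1)"

text \<open>Overlapping pairs are counted through a common neighbour \<open>u\<close>.\<close>

lemma sum_nbhd_overlap_le:
  assumes "G \<in> regular_graphs n t"
  shows "(\<Sum>x<n. \<Sum>y<n. nbhd_overlap G x y) \<le> n * (real t)\<^sup>2"
proof -
  have "simple_graph n G" and degree: "\<And>i. i < n \<Longrightarrow> card (nbhd G i) = t"
    using assms by (auto simp: regular_graphs_def)
  let ?P = "{z \<in> {..<n} \<times> {..<n}. nbhd G (fst z) \<inter> nbhd G (snd z) \<noteq> {}}"
  have "?P \<subseteq> (\<Union>u<n. nbhd G u \<times> nbhd G u)"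
  proof
    fix z
    assume "z \<in> ?P"
    then obtain u where "u \<in> nbhd G (fst z)" and "u \<in> nbhd G (snd z)"
      by auto
    moreover from this have "u < n"
      using nbhd_subset[OF \<open>simple_graph n G\<close>] by auto
    ultimately show "z \<in> (\<Union>u<n. nbhd G u \<times> nbhd G u)"
      using mem_nbhd_commute by (cases z) auto
  qed
  moreover have "finite (nbhd G u)" for u
    using nbhd_subset[OF \<open>simple_graph n G\<close>] finite_subset by blast
  ultimately have "card ?P \<le> card (\<Union>u<n. nbhd G u \<times> nbhd G u)"
    by (intro card_mono) auto
  also have "\<dots> \<le> (\<Sum>u<n. card (nbhd G u \<times> nbhd G u))"
    by (rule card_UN_le) simp
  also have "\<dots> = n * t\<^sup>2"
    using degree by (simp add: card_cartesian_product power2_eq_square)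
  finally have "card ?P \<le> n * t\<^sup>2" .
  have "(\<Sum>x<n. \<Sum>y<n. nbhd_overlap G x y) = (\<Sum>z\<in>{..<n} \<times> {..<n}. if nbhd G (fst z) \<inter> nbhd G (snd z) \<noteq> {} then 1 else 0)"
    by (simp add: sum.cartesian_product case_prod_beta nbhd_overlap_def)
       (intro sum.cong refl, auto)
  also have "\<dots> = card ?P"
    by (simp add: sum.If_cases Int_def)
  finally show ?thesis
    using \<open>card ?P \<le> n * t\<^sup>2\<close> by (simp flip: of_nat_mult of_nat_power)
qed

lemma finite_starpartite_graphs: "finite (starpartite_graphs n t)"
proof -
  have "starpartite_graphs n t = starpartite n ` {T. T \<subseteq> {..<n} \<and> card T = t}"
    by (auto simp: starpartite_graphs_def)
  moreover have "finite {T. T \<subseteq> {..<n} \<and> card T = t}"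
    by (rule finite_subset[of _ "Pow {..<n}"]) auto
  ultimately show ?thesis
    by simp
qed

lemma starpartite_graphs_nonempty: "t \<le> n \<Longrightarrow> starpartite_graphs n t \<noteq> {}"
  by (auto simp: starpartite_graphs_def intro!: exI[of _ "{..<t}"])

lemma finite_regular_graphs: "finite (regular_graphs n t)"
proof (rule finite_subset)
  show "regular_graphs n t \<subseteq> Pow ((\<lambda>(i, j). {i, j}) ` ({..<n} \<times> {..<n}))"
    by (auto simp: regular_graphs_def simple_graph_def)
qed simp

section \<open>The protocol\<close>

text \<open>The public string consists of a slot map \<open>s\<close>, sending each of the \<open>S\<close> slots to a node,
  and signs \<open>g (k, u)\<close> for every group \<open>k\<close> and node \<open>u\<close>; slot \<open>j\<close> belongs to group
  \<open>j div (2 * m)\<close>. A node occupying a slot reports that slot together with a randomized-response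
  bit whose bias is the clipped correlation of its neighbourhood with the group's signs; the
  report \<open>0\<close> means "not sampled".\<close>

definition sampled :: "nat \<Rightarrow> (nat \<Rightarrow> nat) \<Rightarrow> nat \<Rightarrow> bool" where
  "sampled S s i \<longleftrightarrow> (\<exists>j<S. s j = i)"

definition first_slot :: "nat \<Rightarrow> (nat \<Rightarrow> nat) \<Rightarrow> nat \<Rightarrow> nat" where
  "first_slot S s i = (LEAST j. j < S \<and> s j = i)"

definition nbhd_corr :: "nat \<Rightarrow> real \<Rightarrow> (nat \<times> nat \<Rightarrow> bool) \<Rightarrow> nat \<Rightarrow> nat set \<Rightarrow> real" where
  "nbhd_corr n D g k N = clip ((\<Sum>u\<in>N \<inter> {..<n}. rad (g (k, u))) / D)"

definition encode_report :: "nat \<Rightarrow> bool \<Rightarrow> nat" where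
  "encode_report j b = Suc (2 * j + (if b then 1 else 0))"

definition rr_bias :: "real \<Rightarrow> real \<Rightarrow> real" where
  "rr_bias \<beta> q = (1 + \<beta> * q) / 2"

definition local_report ::
  "nat \<Rightarrow> nat \<Rightarrow> nat \<Rightarrow> real \<Rightarrow> real \<Rightarrow> (nat \<Rightarrow> nat) \<Rightarrow> (nat \<times> nat \<Rightarrow> bool) \<Rightarrow> nat \<Rightarrow> nat set \<Rightarrow> nat pmf"
where
  "local_report n m S \<beta> D s g i N =
     (if sampled S s i then
        map_pmf (encode_report (first_slot S s i))
          (bernoulli_pmf (rr_bias \<beta> (nbhd_corr n D g (first_slot S s i div (2 * m)) N)))
      else return_pmf 0)"

definition report_pmf ::
  "nat \<Rightarrow> nat \<Rightarrow> nat \<Rightarrow> real \<Rightarrow> real \<Rightarrow> (nat \<Rightarrow> nat) \<Rightarrow> graph \<Rightarrow> (nat \<times> nat \<Rightarrow> bool) \<Rightarrow> (nat \<Rightarrow> nat) pmf"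
where
  "report_pmf n m S \<beta> D s G g = Pi_pmf {..<n} 0 (\<lambda>i. local_report n m S \<beta> D s g i (nbhd G i))"

definition group_slots :: "nat \<Rightarrow> nat \<Rightarrow> nat set" where
  "group_slots m k = {2 * m * k ..< 2 * m * Suc k}"

definition left_slots :: "nat \<Rightarrow> nat \<Rightarrow> nat set" where
  "left_slots m k = {2 * m * k ..< 2 * m * k + m}"

definition right_slots :: "nat \<Rightarrow> nat \<Rightarrow> nat set" where
  "right_slots m k = {2 * m * k + m ..< 2 * m * Suc k}"

lemma card_left_slots [simp]: "card (left_slots m k) = m"
  by (simp add: left_slots_def)

lemma card_right_slots [simp]: "card (right_slots m k) = m"
  by (simp add: right_slots_def)

lemma left_right_slots_disjoint: "left_slots m k \<inter> right_slots m k = {}"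
  by (auto simp: left_slots_def right_slots_def)

lemma left_right_slots_subset: "left_slots m k \<subseteq> group_slots m k" "right_slots m k \<subseteq> group_slots m k"
  by (auto simp: left_slots_def right_slots_def group_slots_def)

lemma group_slots_div: "j \<in> group_slots m k \<Longrightarrow> j div (2 * m) = k"
  by (rule div_nat_eqI) (auto simp: group_slots_def)

lemma group_slots_disjoint: "k \<noteq> l \<Longrightarrow> group_slots m k \<inter> group_slots m l = {}"
  using group_slots_div by blast

lemma group_slots_subset: "k < r \<Longrightarrow> group_slots m k \<subseteq> {..<2 * r * m}"
proof -
  assume "k < r"
  then have "2 * m * Suc k \<le> 2 * m * r"
    by (intro mult_le_mono2) simp
  also have "\<dots> = 2 * r * m"
    by (simp add: ac_simps)
  finally have "2 * m * Suc k \<le> 2 * r * m" .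
  then show "group_slots m k \<subseteq> {..<2 * r * m}"
    by (auto simp: group_slots_def)
qed

definition slot_overlaps :: "graph \<Rightarrow> nat \<Rightarrow> nat \<Rightarrow> (nat \<Rightarrow> nat) \<Rightarrow> real" where
  "slot_overlaps G m r s = (\<Sum>k<r. \<Sum>a\<in>left_slots m k. \<Sum>b\<in>right_slots m k. nbhd_overlap G (s a) (s b))"

lemma slot_overlaps_nonneg: "0 \<le> slot_overlaps G m r s"
  unfolding slot_overlaps_def by (intro sum_nonneg) (simp add: nbhd_overlap_def)

definition report_sign :: "nat \<Rightarrow> real" where
  "report_sign w = (if (w - 1) mod 2 = 1 then 1 else -1)"

lemma report_sign_encode_report [simp]: "report_sign (encode_report j b) = rad b"
  by (simp add: report_sign_def encode_report_def rad_def)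

lemma abs_report_sign [simp]: "\<bar>report_sign w\<bar> = 1"
  by (simp add: report_sign_def)

lemma report_sign_mult_self [simp]: "report_sign w * report_sign w = 1"
  by (simp add: report_sign_def)

text \<open>\<open>slot_answer n x j\<close> recovers the bit reported for slot \<open>j\<close> from the reports of all nodes.\<close>

definition slot_answer :: "nat \<Rightarrow> (nat \<Rightarrow> nat) \<Rightarrow> nat \<Rightarrow> real" where
  "slot_answer n x j = (\<Sum>i<n. if x i \<noteq> 0 \<and> (x i - 1) div 2 = j then report_sign (x i) else 0)"

definition test_statistic :: "nat \<Rightarrow> nat \<Rightarrow> nat \<Rightarrow> (nat \<Rightarrow> nat) \<Rightarrow> real" where
  "test_statistic n m r x =
     (\<Sum>k<r. ((\<Sum>j\<in>left_slots m k. slot_answer n x j) / m) * ((\<Sum>j\<in>right_slots m k. slot_answer n x j) / m))"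

definition decide :: "nat \<Rightarrow> nat \<Rightarrow> nat \<Rightarrow> real \<Rightarrow> (nat \<Rightarrow> nat) \<Rightarrow> label" where
  "decide n m r \<tau> x = (if \<tau> \<le> test_statistic n m r x then Starpartite else Regular)"

lemma encode_report_decode: "(encode_report j b - 1) div 2 = j" "encode_report j b \<noteq> 0"
  by (auto simp: encode_report_def)

lemma inj_encode_report: "inj (encode_report j)"
  by (rule injI) (auto simp: encode_report_def split: if_splits)

lemma abs_nbhd_corr_le: "\<bar>nbhd_corr n D g k N\<bar> \<le> 1"
  by (simp add: nbhd_corr_def abs_clip_le)

lemma rr_bias_bounds:
  assumes "0 \<le> \<beta>" and "\<beta> \<le> 1" and "\<bar>q\<bar> \<le> 1"
  shows "0 \<le> rr_bias \<beta> q" and "rr_bias \<beta> q \<le> 1"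
proof -
  have "\<bar>\<beta> * q\<bar> \<le> 1"
    using assms by (simp add: abs_mult mult_le_one)
  then show "0 \<le> rr_bias \<beta> q" and "rr_bias \<beta> q \<le> 1"
    by (auto simp: rr_bias_def)
qed

section \<open>Privacy of the local randomizer\<close>

lemma one_plus_le_exp_mult:
  fixes x y d :: real
  assumes "\<bar>y\<bar> \<le> 1/2" and "\<bar>x - y\<bar> \<le> d"
  shows "1 + x \<le> exp (2 * d) * (1 + y)"
proof -
  have "0 \<le> d"
    using assms(2) by linarith
  have "2 * d * (1/2) \<le> 2 * d * (1 + y)"
    using assms(1) \<open>0 \<le> d\<close> by (intro mult_left_mono) auto
  then have "1 + x \<le> (1 + y) + 2 * d * (1 + y)"
    using assms(2) by linarith
  also have "\<dots> = (1 + 2 * d) * (1 + y)"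
    by (simp add: algebra_simps)
  also have "\<dots> \<le> exp (2 * d) * (1 + y)"
    using assms(1) \<open>0 \<le> d\<close> by (intro mult_right_mono exp_ge_add_one_self_aux) auto
  finally show ?thesis .
qed

lemma rr_bias_ratio:
  assumes "0 \<le> \<beta>" and "\<beta> \<le> 1/2" and "\<bar>q\<bar> \<le> 1" and "\<bar>q'\<bar> \<le> 1" and "\<bar>q - q'\<bar> \<le> \<Delta>"
  shows "rr_bias \<beta> q \<le> exp (2 * \<beta> * \<Delta>) * rr_bias \<beta> q'"
    and "1 - rr_bias \<beta> q \<le> exp (2 * \<beta> * \<Delta>) * (1 - rr_bias \<beta> q')"
proof -
  have small: "\<bar>\<beta> * q'\<bar> \<le> 1/2"
    using assms(1,2,4) mult_mono[of \<beta> "1/2" "\<bar>q'\<bar>" 1] by (simp add: abs_mult)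
  have close: "\<bar>\<beta> * q - \<beta> * q'\<bar> \<le> \<beta> * \<Delta>"
    using assms(1,5) by (simp add: right_diff_distrib[symmetric] abs_mult mult_left_mono)
  have "1 + \<beta> * q \<le> exp (2 * (\<beta> * \<Delta>)) * (1 + \<beta> * q')"
    using small close by (rule one_plus_le_exp_mult)
  moreover have "1 + - (\<beta> * q) \<le> exp (2 * (\<beta> * \<Delta>)) * (1 + - (\<beta> * q'))"
    using small close by (intro one_plus_le_exp_mult) auto
  ultimately show "rr_bias \<beta> q \<le> exp (2 * \<beta> * \<Delta>) * rr_bias \<beta> q'"
    and "1 - rr_bias \<beta> q \<le> exp (2 * \<beta> * \<Delta>) * (1 - rr_bias \<beta> q')"
    by (auto simp: rr_bias_def field_simps)
qed

lemma pmf_map_bernoulli_pmf_inj: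
  assumes "inj f" and "0 \<le> p" and "p \<le> 1"
  shows "pmf (map_pmf f (bernoulli_pmf p)) w = (if w = f True then p else if w = f False then 1 - p else 0)"
proof (cases "w \<in> range f")
  case True
  then obtain b where "w = f b"
    by auto
  moreover have "pmf (map_pmf f (bernoulli_pmf p)) (f b) = pmf (bernoulli_pmf p) b"
    by (rule pmf_map_inj'[OF assms(1)])
  ultimately show ?thesis
    using assms by (cases b) (auto dest: injD)
next
  case False
  then have "pmf (map_pmf f (bernoulli_pmf p)) w = 0"
    by (intro pmf_map_outside) auto
  then show ?thesis
    using False by auto
qed

lemma nbhd_corr_diff_le:
  assumes "N - {v} = N' - {v}" and "D > 0"
  shows "\<bar>nbhd_corr n D g k N - nbhd_corr n D g k N'\<bar> \<le> 1 / D"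
proof -
  let ?f = "\<lambda>u. rad (g (k, u))"
  have remove_v: "(\<Sum>u\<in>M \<inter> {..<n}. ?f u) = (\<Sum>u\<in>(M - {v}) \<inter> {..<n}. ?f u) + (if v \<in> M \<inter> {..<n} then ?f v else 0)"
    for M :: "nat set"
  proof -
    have "(M - {v}) \<inter> {..<n} = M \<inter> {..<n} - {v}"
      by auto
    then show ?thesis
      by (simp add: sum_diff1)
  qed
  have "\<bar>(\<Sum>u\<in>N \<inter> {..<n}. ?f u) - (\<Sum>u\<in>N' \<inter> {..<n}. ?f u)\<bar> \<le> 1"
    unfolding remove_v[of N] remove_v[of N'] assms(1) by (auto simp: rad_def)
  then have "\<bar>(\<Sum>u\<in>N \<inter> {..<n}. ?f u) / D - (\<Sum>u\<in>N' \<inter> {..<n}. ?f u) / D\<bar> \<le> 1 / D"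
    using assms(2) by (simp add: diff_divide_distrib[symmetric] divide_right_mono)
  then show ?thesis
    unfolding nbhd_corr_def using abs_clip_diff_le order_trans by blast
qed

lemma pmf_local_report_sampled:
  fixes n m S :: nat and \<beta> D :: real and s :: "nat \<Rightarrow> nat" and g :: "nat \<times> nat \<Rightarrow> bool"
    and N :: "nat set"
  assumes "sampled S s i" and "0 \<le> \<beta>" and "\<beta> \<le> 1/2"
  defines "j \<equiv> first_slot S s i"
  defines "q \<equiv> nbhd_corr n D g (j div (2 * m)) N"
  shows "pmf (local_report n m S \<beta> D s g i N) w =
    (if w = encode_report j True then rr_bias \<beta> q else if w = encode_report j False then 1 - rr_bias \<beta> q else 0)"
proof -
  have "0 \<le> rr_bias \<beta> q" "rr_bias \<beta> q \<le> 1"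
    unfolding q_def using rr_bias_bounds abs_nbhd_corr_le assms(2,3) by auto
  then show ?thesis
    unfolding local_report_def using assms(1)
    by (simp add: j_def[symmetric] q_def[symmetric] pmf_map_bernoulli_pmf_inj[OF inj_encode_report])
qed

text \<open>Changing the edges at \<open>v\<close> moves the bias of \<open>v\<close> itself by at most \<open>\<beta>\<close>
  and that of every other node by at most \<open>\<beta> / D\<close>.\<close>

lemma pmf_local_report_le:
  assumes "0 \<le> \<beta>" and "\<beta> \<le> 1/2" and "D > 0"
    and "\<forall>e. v \<notin> e \<longrightarrow> (e \<in> G \<longleftrightarrow> e \<in> G')"
  shows "pmf (local_report n m S \<beta> D s g i (nbhd G i)) w \<le>
         exp (if sampled S s i then (if i = v then 4 * \<beta> else 2 * \<beta> / D) else 0) *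
         pmf (local_report n m S \<beta> D s g i (nbhd G' i)) w"
proof (cases "sampled S s i")
  case False
  then show ?thesis
    by (simp add: local_report_def)
next
  case True
  define k where "k = first_slot S s i div (2 * m)"
  define \<Delta> where "\<Delta> = (if i = v then 2 else 1 / D)"
  have "\<bar>nbhd_corr n D g k (nbhd G i) - nbhd_corr n D g k (nbhd G' i)\<bar> \<le> \<Delta>"
  proof (cases "i = v")
    case True
    then show ?thesis
      using abs_triangle_ineq4[of "nbhd_corr n D g k (nbhd G i)" "nbhd_corr n D g k (nbhd G' i)"]
        abs_nbhd_corr_le[of n D g k "nbhd G i"] abs_nbhd_corr_le[of n D g k "nbhd G' i"]
      by (simp add: \<Delta>_def)
  next
    case False
    then have "nbhd G i - {v} = nbhd G' i - {v}"
      using assms(4) by (auto simp: nbhd_def)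
    then show ?thesis
      unfolding \<Delta>_def using False nbhd_corr_diff_le assms(3) by simp
  qed
  note ratio = rr_bias_ratio[OF assms(1,2) abs_nbhd_corr_le abs_nbhd_corr_le this]
  have "(if sampled S s i then (if i = v then 4 * \<beta> else 2 * \<beta> / D) else 0) = 2 * \<beta> * \<Delta>"
    using True by (simp add: \<Delta>_def)
  then show ?thesis
    unfolding pmf_local_report_sampled[OF True assms(1,2)] using ratio by (auto simp: k_def)
qed

lemma card_sampled_le: "card {i \<in> {..<n}. sampled S s i} \<le> S"
proof -
  have "card {i \<in> {..<n}. sampled S s i} \<le> card (s ` {..<S})"
    by (intro card_mono) (auto simp: sampled_def)
  also have "\<dots> \<le> S"
    using card_image_le[of "{..<S}" s] by simp
  finally show ?thesis .
qed

lemma pmf_Pi_local_report_le: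
  assumes "0 \<le> \<beta>" and "\<beta> \<le> 1/2" and "D > 0"
    and "\<forall>e. v \<notin> e \<longrightarrow> (e \<in> G \<longleftrightarrow> e \<in> G')"
  shows "pmf (report_pmf n m S \<beta> D s G g) x \<le> exp (4 * \<beta> + 2 * \<beta> * S / D) * pmf (report_pmf n m S \<beta> D s G' g) x"
proof -
  define c where "c i = (if sampled S s i then (if i = v then 4 * \<beta> else 2 * \<beta> / D) else 0)" for i
  have "(\<Sum>i<n. c i) \<le> (\<Sum>i<n. (if i = v then 4 * \<beta> else 0) + (if sampled S s i then 2 * \<beta> / D else 0))"
    using assms(1,3) by (intro sum_mono) (auto simp: c_def)
  also have "\<dots> = (\<Sum>i<n. if i = v then 4 * \<beta> else 0) + 2 * \<beta> / D * card {i \<in> {..<n}. sampled S s i}"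
    by (simp add: sum.distrib sum.If_cases Int_def conj_commute)
  also have "\<dots> \<le> 4 * \<beta> + 2 * \<beta> / D * S"
    using assms(1,3) card_sampled_le[of n S s]
    by (intro add_mono mult_left_mono) (auto simp: sum.delta)
  finally have cost: "(\<Sum>i<n. c i) \<le> 4 * \<beta> + 2 * \<beta> * S / D"
    by simp
  have "(\<Prod>i<n. pmf (local_report n m S \<beta> D s g i (nbhd G i)) (x i)) \<le>
        (\<Prod>i<n. exp (c i) * pmf (local_report n m S \<beta> D s g i (nbhd G' i)) (x i))"
    unfolding c_def by (intro prod_mono conjI pmf_nonneg pmf_local_report_le[OF assms])
  also have "\<dots> = exp (\<Sum>i<n. c i) * (\<Prod>i<n. pmf (local_report n m S \<beta> D s g i (nbhd G' i)) (x i))"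
    by (simp add: prod.distrib exp_sum)
  also have "\<dots> \<le> exp (4 * \<beta> + 2 * \<beta> * S / D) * (\<Prod>i<n. pmf (local_report n m S \<beta> D s g i (nbhd G' i)) (x i))"
    using cost by (intro mult_right_mono) (auto intro: prod_nonneg)
  finally show ?thesis
    by (auto simp: report_pmf_def pmf_Pi)
qed

section \<open>Analysis for a fixed injective sample\<close>

locale injective_sample =
  fixes n m r :: nat and \<beta> D :: real and s :: "nat \<Rightarrow> nat" and G :: graph
  assumes m_pos: "m > 0" and \<beta>_nonneg: "0 \<le> \<beta>" and \<beta>_le: "\<beta> \<le> 1/2" and D_pos: "D > 0"
    and inj_s: "inj_on s {..<2 * r * m}" and s_less: "\<And>j. j < 2 * r * m \<Longrightarrow> s j < n"
begin

abbreviation S :: nat where "S \<equiv> 2 * r * m"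

abbreviation sign_indices :: "(nat \<times> nat) set" where "sign_indices \<equiv> {..<r} \<times> {..<n}"

abbreviation reports :: "(nat \<times> nat \<Rightarrow> bool) \<Rightarrow> (nat \<Rightarrow> nat) pmf" where
  "reports \<equiv> report_pmf n m S \<beta> D s G"

definition joint :: "(nat \<Rightarrow> nat) pmf" where
  "joint = bind_pmf (rademacher_pmf sign_indices) reports"

definition slot_corr :: "(nat \<times> nat \<Rightarrow> bool) \<Rightarrow> nat \<Rightarrow> real" where
  "slot_corr g j = nbhd_corr n D g (j div (2 * m)) (nbhd G (s j))"

definition slot_sign :: "nat \<Rightarrow> (nat \<Rightarrow> nat) \<Rightarrow> real" where
  "slot_sign j x = report_sign (x (s j))"

definition half_mean :: "nat set \<Rightarrow> (nat \<Rightarrow> nat) \<Rightarrow> real" where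
  "half_mean J x = (\<Sum>j\<in>J. slot_sign j x) / m"

definition group_stat :: "nat \<Rightarrow> (nat \<Rightarrow> nat) \<Rightarrow> real" where
  "group_stat k x = half_mean (left_slots m k) x * half_mean (right_slots m k) x"

definition stat :: "(nat \<Rightarrow> nat) \<Rightarrow> real" where
  "stat x = (\<Sum>k<r. group_stat k x)"

definition group_mean :: "(nat \<times> nat \<Rightarrow> bool) \<Rightarrow> nat \<Rightarrow> real" where
  "group_mean g k = ((\<Sum>j\<in>left_slots m k. \<beta> * slot_corr g j) / m) * ((\<Sum>j\<in>right_slots m k. \<beta> * slot_corr g j) / m)"

lemma first_slot_slot: "j < S \<Longrightarrow> first_slot S s (s j) = j"
  unfolding first_slot_def
  by (rule Least_equality) (auto dest: inj_onD[OF inj_s] simp: le_less)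

lemma local_report_slot:
  "j < S \<Longrightarrow> local_report n m S \<beta> D s g (s j) (nbhd G (s j)) =
     map_pmf (encode_report j) (bernoulli_pmf (rr_bias \<beta> (slot_corr g j)))"
  by (auto simp: local_report_def sampled_def first_slot_slot slot_corr_def)

lemma abs_slot_corr_le: "\<bar>slot_corr g j\<bar> \<le> 1"
  by (simp add: slot_corr_def abs_nbhd_corr_le)

lemma finite_set_reports: "finite (set_pmf (reports g))"
  unfolding report_pmf_def by (simp add: set_Pi_pmf finite_PiE_dflt local_report_def)

lemma integrable_reports [simp]: "integrable (measure_pmf (reports g)) (f :: _ \<Rightarrow> real)"
  by (rule integrable_measure_pmf_finite[OF finite_set_reports])

lemma integral_slot_sign: "j < S \<Longrightarrow> measure_pmf.expectation (reports g) (slot_sign j) = \<beta> * slot_corr g j"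
proof -
  assume "j < S"
  have bias_bounds: "0 \<le> rr_bias \<beta> (slot_corr g j)" "rr_bias \<beta> (slot_corr g j) \<le> 1"
    using rr_bias_bounds \<beta>_nonneg \<beta>_le abs_slot_corr_le by auto
  have "measure_pmf.expectation (reports g) (slot_sign j) =
        measure_pmf.expectation (local_report n m S \<beta> D s g (s j) (nbhd G (s j))) report_sign"
    unfolding report_pmf_def slot_sign_def using s_less[OF \<open>j < S\<close>] by (intro integral_Pi_pmf_component) auto
  also have "\<dots> = rr_bias \<beta> (slot_corr g j) - (1 - rr_bias \<beta> (slot_corr g j))"
    using \<open>j < S\<close> local_report_slot bias_bounds by (simp add: rad_def)
  also have "\<dots> = \<beta> * slot_corr g j"
    by (simp add: rr_bias_def)
  finally show ?thesis .
qed

text \<open>The slot map is injective, so disjoint sets of slots are answered by disjoint sets of nodes.\<close>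

lemma integral_reports_mult_disjoint:
  fixes F H :: "(nat \<Rightarrow> nat) \<Rightarrow> real"
  assumes "U \<subseteq> {..<S}" and "V \<subseteq> {..<S}" and "U \<inter> V = {}"
    and F_dep: "\<And>x x'. (\<And>j. j \<in> U \<Longrightarrow> x (s j) = x' (s j)) \<Longrightarrow> F x = F x'"
    and H_dep: "\<And>x x'. (\<And>j. j \<in> V \<Longrightarrow> x (s j) = x' (s j)) \<Longrightarrow> H x = H x'"
    and "\<And>y. \<bar>F y\<bar> \<le> BF" and "\<And>y. \<bar>H y\<bar> \<le> BH"
  shows "measure_pmf.expectation (reports g) (\<lambda>x. F x * H x) =
         measure_pmf.expectation (reports g) F * measure_pmf.expectation (reports g) H"
  unfolding report_pmf_def
proof (rule integral_Pi_pmf_mult_disjoint[where U="s ` U" and V="s ` V" and BF=BF and BH=BH])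
  show "s ` U \<subseteq> {..<n}"
    using assms(1) s_less by auto
  show "s ` U \<inter> s ` V = {}"
    using assms(1-3) inj_s by (auto dest: inj_onD)
  show "F x = F x'" if "\<And>i. i \<in> s ` U \<Longrightarrow> x i = x' i" for x x'
    using that by (intro F_dep) auto
  show "H x = H x'" if "\<And>i. i \<in> s ` V \<Longrightarrow> x i = x' i" for x x'
    using that by (intro H_dep) auto
qed (use assms(6,7) in auto)

lemma integral_sum_slot_sign_square_le:
  assumes "J \<subseteq> {..<S}"
  shows "measure_pmf.expectation (reports g) (\<lambda>x. (\<Sum>j\<in>J. slot_sign j x)\<^sup>2) \<le>
         card J + (\<Sum>j\<in>J. \<beta> * slot_corr g j)\<^sup>2"
proof -
  let ?\<mu> = "\<lambda>j. \<beta> * slot_corr g j"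
  have "finite J"
    using assms finite_subset by blast
  have pair: "measure_pmf.expectation (reports g) (\<lambda>x. slot_sign j x * slot_sign j' x) =
              (if j = j' then 1 else ?\<mu> j * ?\<mu> j')" if "j \<in> J" "j' \<in> J" for j j'
  proof (cases "j = j'")
    case False
    then have "measure_pmf.expectation (reports g) (\<lambda>x. slot_sign j x * slot_sign j' x) =
      measure_pmf.expectation (reports g) (slot_sign j) * measure_pmf.expectation (reports g) (slot_sign j')"
      using that assms
      by (intro integral_reports_mult_disjoint[where U="{j}" and V="{j'}" and BF=1 and BH=1])
         (auto simp: slot_sign_def)
    moreover have "j < S" "j' < S"
      using that assms by auto
    ultimately show ?thesis
      using False by (simp add: integral_slot_sign)
  qed (simp add: slot_sign_def)
  have "measure_pmf.expectation (reports g) (\<lambda>x. (\<Sum>j\<in>J. slot_sign j x)\<^sup>2) =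
        (\<Sum>j\<in>J. \<Sum>j'\<in>J. measure_pmf.expectation (reports g) (\<lambda>x. slot_sign j x * slot_sign j' x))"
    by (simp add: power2_eq_square sum_product)
  also have "\<dots> = (\<Sum>j\<in>J. \<Sum>j'\<in>J. ?\<mu> j * ?\<mu> j' + (if j = j' then 1 - ?\<mu> j * ?\<mu> j' else 0))"
    by (intro sum.cong refl) (simp add: pair)
  also have "\<dots> = (\<Sum>j\<in>J. ?\<mu> j)\<^sup>2 + (\<Sum>j\<in>J. 1 - ?\<mu> j * ?\<mu> j)"
    using \<open>finite J\<close> by (simp add: sum.distrib power2_eq_square sum_product)
  also have "\<dots> \<le> (\<Sum>j\<in>J. ?\<mu> j)\<^sup>2 + card J"
    using sum_mono[of J "\<lambda>j. 1 - ?\<mu> j * ?\<mu> j" "\<lambda>_. 1"] by simp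
  finally show ?thesis
    by simp
qed

lemma abs_mean_le_1:
  fixes f :: "nat \<Rightarrow> real"
  assumes "card J = m" and "\<And>j. \<bar>f j\<bar> \<le> 1"
  shows "\<bar>(\<Sum>j\<in>J. f j) / m\<bar> \<le> 1"
proof -
  have "\<bar>\<Sum>j\<in>J. f j\<bar> \<le> (\<Sum>j\<in>J. \<bar>f j\<bar>)"
    by (rule sum_abs)
  also have "\<dots> \<le> (\<Sum>j\<in>J. 1)"
    by (intro sum_mono assms(2))
  finally have "\<bar>\<Sum>j\<in>J. f j\<bar> \<le> real m"
    using assms(1) by simp
  then show ?thesis
    using m_pos by (simp add: abs_divide)
qed

lemma abs_half_mean_le: "card J = m \<Longrightarrow> \<bar>half_mean J x\<bar> \<le> 1"
  unfolding half_mean_def by (rule abs_mean_le_1) (simp_all add: slot_sign_def)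

lemma abs_group_stat_le: "\<bar>group_stat k x\<bar> \<le> 1"
  unfolding group_stat_def abs_mult
  by (intro mult_le_one abs_half_mean_le) simp_all

lemma abs_stat_le: "\<bar>stat x\<bar> \<le> r"
proof -
  have "\<bar>stat x\<bar> \<le> (\<Sum>k<r. \<bar>group_stat k x\<bar>)"
    unfolding stat_def by (rule sum_abs)
  also have "\<dots> \<le> (\<Sum>k<r. 1)"
    by (intro sum_mono abs_group_stat_le)
  finally show ?thesis
    by simp
qed

lemma half_mean_cong: "(\<And>j. j \<in> J \<Longrightarrow> x (s j) = x' (s j)) \<Longrightarrow> half_mean J x = half_mean J x'"
  unfolding half_mean_def slot_sign_def by (intro arg_cong[where f="\<lambda>z. z / real m"] sum.cong) auto

lemma group_stat_cong:
  "(\<And>j. j \<in> group_slots m k \<Longrightarrow> x (s j) = x' (s j)) \<Longrightarrow> group_stat k x = group_stat k x'"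
  unfolding group_stat_def using left_right_slots_subset[of m k]
  by (intro arg_cong2[where f="(*)"] half_mean_cong) auto

lemma integral_half_mean:
  "J \<subseteq> {..<S} \<Longrightarrow> measure_pmf.expectation (reports g) (half_mean J) = (\<Sum>j\<in>J. \<beta> * slot_corr g j) / m"
  unfolding half_mean_def by (auto simp: integral_slot_sign intro!: sum.cong)

lemma integral_half_mean_square_le:
  assumes "J \<subseteq> {..<S}" and "card J = m"
  shows "measure_pmf.expectation (reports g) (\<lambda>x. half_mean J x ^ 2) \<le> 1/m + \<beta>\<^sup>2"
proof -
  have "\<bar>\<Sum>j\<in>J. \<beta> * slot_corr g j\<bar> \<le> (\<Sum>j\<in>J. \<bar>\<beta> * slot_corr g j\<bar>)"
    by (rule sum_abs)
  also have "\<dots> \<le> (\<Sum>j\<in>J. \<beta>)"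
    using \<beta>_nonneg abs_slot_corr_le by (intro sum_mono) (auto simp: abs_mult intro: mult_left_le)
  also have "\<dots> = m * \<beta>"
    using assms(2) by simp
  finally have "\<bar>\<Sum>j\<in>J. \<beta> * slot_corr g j\<bar> \<le> m * \<beta>" .
  then have "(\<Sum>j\<in>J. \<beta> * slot_corr g j)\<^sup>2 \<le> (m * \<beta>)\<^sup>2"
    using power_mono[OF _ abs_ge_zero, where n=2] by fastforce
  then have "measure_pmf.expectation (reports g) (\<lambda>x. (\<Sum>j\<in>J. slot_sign j x)\<^sup>2) \<le> m + (m * \<beta>)\<^sup>2"
    using integral_sum_slot_sign_square_le[OF assms(1), of g] assms(2) by linarith
  then have "measure_pmf.expectation (reports g) (\<lambda>x. (\<Sum>j\<in>J. slot_sign j x)\<^sup>2) / m\<^sup>2 \<le> (m + (m * \<beta>)\<^sup>2) / m\<^sup>2"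
    by (simp add: divide_right_mono)
  also have "\<dots> = 1/m + \<beta>\<^sup>2"
    using m_pos by (simp add: field_simps power2_eq_square)
  finally show ?thesis
    unfolding half_mean_def by (simp add: power_divide)
qed

lemma integral_group_stat:
  assumes "k < r"
  shows "measure_pmf.expectation (reports g) (group_stat k) = group_mean g k"
proof -
  have halves: "left_slots m k \<subseteq> {..<S}" "right_slots m k \<subseteq> {..<S}"
    using group_slots_subset[OF assms] left_right_slots_subset[of m k] by auto
  have "measure_pmf.expectation (reports g) (\<lambda>x. half_mean (left_slots m k) x * half_mean (right_slots m k) x) =
    measure_pmf.expectation (reports g) (half_mean (left_slots m k)) *
    measure_pmf.expectation (reports g) (half_mean (right_slots m k))"
    using halves left_right_slots_disjoint[of m k]
    by (intro integral_reports_mult_disjoint[where BF=1 and BH=1] half_mean_cong abs_half_mean_le) auto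
  then show ?thesis
    using halves by (simp add: group_stat_def[abs_def] group_mean_def integral_half_mean)
qed

lemma integral_group_stat_square_le:
  assumes "k < r"
  shows "measure_pmf.expectation (reports g) (\<lambda>x. group_stat k x ^ 2) \<le> (1/m + \<beta>\<^sup>2)\<^sup>2"
proof -
  have halves: "left_slots m k \<subseteq> {..<S}" "right_slots m k \<subseteq> {..<S}"
    using group_slots_subset[OF assms] left_right_slots_subset[of m k] by auto
  have square_le: "\<bar>half_mean J x ^ 2\<bar> \<le> 1" if "card J = m" for J x
    using abs_half_mean_le[OF that, of x] by (simp add: abs_square_le_1)
  have "measure_pmf.expectation (reports g) (\<lambda>x. half_mean (left_slots m k) x ^ 2 * half_mean (right_slots m k) x ^ 2) =
    measure_pmf.expectation (reports g) (\<lambda>x. half_mean (left_slots m k) x ^ 2) *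
    measure_pmf.expectation (reports g) (\<lambda>x. half_mean (right_slots m k) x ^ 2)"
    using halves left_right_slots_disjoint[of m k]
    by (intro integral_reports_mult_disjoint[where BF=1 and BH=1] arg_cong[where f="\<lambda>z. z ^ 2"]
        half_mean_cong square_le) auto
  also have "\<dots> \<le> (1/m + \<beta>\<^sup>2) * (1/m + \<beta>\<^sup>2)"
    using halves by (intro mult_mono integral_half_mean_square_le integral_nonneg) auto
  finally show ?thesis
    by (simp add: group_stat_def power2_eq_square power_mult_distrib algebra_simps)
qed

lemma integral_group_stat_mult:
  assumes "k < r" and "l < r" and "k \<noteq> l"
  shows "measure_pmf.expectation (reports g) (\<lambda>x. group_stat k x * group_stat l x) = group_mean g k * group_mean g l"
proof -
  have "measure_pmf.expectation (reports g) (\<lambda>x. group_stat k x * group_stat l x) =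
    measure_pmf.expectation (reports g) (group_stat k) * measure_pmf.expectation (reports g) (group_stat l)"
    using group_slots_subset[OF assms(1), of m] group_slots_subset[OF assms(2), of m]
      group_slots_disjoint[OF assms(3), of m]
    by (intro integral_reports_mult_disjoint[where U="group_slots m k" and V="group_slots m l" and BF=1 and BH=1]
        group_stat_cong abs_group_stat_le) auto
  then show ?thesis
    using assms by (simp add: integral_group_stat)
qed

lemma integral_stat_square_reports_le:
  "measure_pmf.expectation (reports g) (\<lambda>x. stat x ^ 2) \<le>
   r * (1/m + \<beta>\<^sup>2)\<^sup>2 + (\<Sum>k<r. \<Sum>l\<in>{..<r} - {k}. group_mean g k * group_mean g l)"
proof -
  have "measure_pmf.expectation (reports g) (\<lambda>x. stat x ^ 2) =
        (\<Sum>k<r. \<Sum>l<r. measure_pmf.expectation (reports g) (\<lambda>x. group_stat k x * group_stat l x))"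
    by (simp add: stat_def power2_eq_square sum_product)
  also have "\<dots> = (\<Sum>k<r. measure_pmf.expectation (reports g) (\<lambda>x. group_stat k x ^ 2)) +
                  (\<Sum>k<r. \<Sum>l\<in>{..<r} - {k}. group_mean g k * group_mean g l)"
    by (simp add: sum_sum_split_diagonal power2_eq_square integral_group_stat_mult)
  also have "\<dots> \<le> (\<Sum>k<r. (1/m + \<beta>\<^sup>2)\<^sup>2) + (\<Sum>k<r. \<Sum>l\<in>{..<r} - {k}. group_mean g k * group_mean g l)"
    by (intro add_right_mono sum_mono integral_group_stat_square_le) simp
  finally show ?thesis
    by simp
qed

lemma integral_joint:
  fixes F :: "(nat \<Rightarrow> nat) \<Rightarrow> real"
  assumes "\<And>x. \<bar>F x\<bar> \<le> B"
  shows "measure_pmf.expectation joint F =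
         measure_pmf.expectation (rademacher_pmf sign_indices) (\<lambda>g. measure_pmf.expectation (reports g) F)"
  unfolding joint_def by (rule integral_bind_pmf_bounded) (rule assms)

lemma group_mean_cong:
  assumes "k < r" and "\<And>u. u < n \<Longrightarrow> g (k, u) = g' (k, u)"
  shows "group_mean g k = group_mean g' k"
proof -
  have "slot_corr g j = slot_corr g' j" if "j \<in> group_slots m k" for j
    unfolding slot_corr_def nbhd_corr_def group_slots_div[OF that] using assms(2)
    by (intro arg_cong[where f=clip] arg_cong[where f="\<lambda>z. z / D"] sum.cong) auto
  then show ?thesis
    unfolding group_mean_def using left_right_slots_subset[of m k]
    by (intro arg_cong2[where f="(*)"] arg_cong[where f="\<lambda>z. z / real m"] sum.cong refl) auto
qed

lemma abs_group_mean_le: "\<bar>group_mean g k\<bar> \<le> 1"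
proof -
  have bound: "\<bar>\<beta> * slot_corr g j\<bar> \<le> 1" for j
  proof -
    have "\<bar>\<beta> * slot_corr g j\<bar> = \<beta> * \<bar>slot_corr g j\<bar>"
      using \<beta>_nonneg by (simp add: abs_mult)
    also have "\<dots> \<le> 1 * 1"
      using \<beta>_nonneg \<beta>_le abs_slot_corr_le by (intro mult_mono) auto
    finally show ?thesis
      by simp
  qed
  show ?thesis
    unfolding group_mean_def abs_mult using bound by (intro mult_le_one abs_mean_le_1) simp_all
qed

lemma integral_group_mean_mult:
  assumes "k < r" and "l < r" and "k \<noteq> l"
  shows "measure_pmf.expectation (rademacher_pmf sign_indices) (\<lambda>g. group_mean g k * group_mean g l) =
         measure_pmf.expectation (rademacher_pmf sign_indices) (\<lambda>g. group_mean g k) *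
         measure_pmf.expectation (rademacher_pmf sign_indices) (\<lambda>g. group_mean g l)"
  unfolding rademacher_pmf_def
proof (rule integral_Pi_pmf_mult_disjoint[where U="{k} \<times> {..<n}" and V="{l} \<times> {..<n}" and BF=1 and BH=1])
  show "group_mean x k = group_mean x' k" if "\<And>i. i \<in> {k} \<times> {..<n} \<Longrightarrow> x i = x' i" for x x'
    using that by (intro group_mean_cong[OF assms(1)]) auto
  show "group_mean x l = group_mean x' l" if "\<And>i. i \<in> {l} \<times> {..<n} \<Longrightarrow> x i = x' i" for x x'
    using that by (intro group_mean_cong[OF assms(2)]) auto
qed (use assms abs_group_mean_le in auto)

lemma integral_stat:
  "measure_pmf.expectation joint stat =
   (\<Sum>k<r. measure_pmf.expectation (rademacher_pmf sign_indices) (\<lambda>g. group_mean g k))"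
  by (simp add: integral_joint[OF abs_stat_le] stat_def integral_group_stat)

lemma integral_stat_square_le:
  "measure_pmf.expectation joint (\<lambda>x. stat x ^ 2) \<le>
   r * (1/m + \<beta>\<^sup>2)\<^sup>2 + (\<Sum>k<r. measure_pmf.expectation (rademacher_pmf sign_indices) (\<lambda>g. group_mean g k))\<^sup>2"
proof -
  define e where "e k = measure_pmf.expectation (rademacher_pmf sign_indices) (\<lambda>g. group_mean g k)" for k
  have "\<bar>stat x ^ 2\<bar> \<le> real r ^ 2" for x
    using power_mono[OF abs_stat_le abs_ge_zero, where n=2] by simp
  then have "measure_pmf.expectation joint (\<lambda>x. stat x ^ 2) =
    measure_pmf.expectation (rademacher_pmf sign_indices) (\<lambda>g. measure_pmf.expectation (reports g) (\<lambda>x. stat x ^ 2))"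
    by (rule integral_joint)
  also have "\<dots> \<le> measure_pmf.expectation (rademacher_pmf sign_indices)
      (\<lambda>g. r * (1/m + \<beta>\<^sup>2)\<^sup>2 + (\<Sum>k<r. \<Sum>l\<in>{..<r} - {k}. group_mean g k * group_mean g l))"
    by (intro integral_mono integral_stat_square_reports_le) simp_all
  also have "\<dots> = r * (1/m + \<beta>\<^sup>2)\<^sup>2 + (\<Sum>k<r. \<Sum>l\<in>{..<r} - {k}. e k * e l)"
    by (simp add: e_def integral_group_mean_mult)
  also have "\<dots> = r * (1/m + \<beta>\<^sup>2)\<^sup>2 + ((\<Sum>k<r. e k)\<^sup>2 - (\<Sum>k<r. e k * e k))"
    by (simp add: power2_eq_square sum_product sum_sum_split_diagonal)
  also have "\<dots> \<le> r * (1/m + \<beta>\<^sup>2)\<^sup>2 + (\<Sum>k<r. e k)\<^sup>2"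
    using sum_nonneg[of "{..<r}" "\<lambda>k. e k * e k"] by simp
  finally show ?thesis
    by (simp add: e_def)
qed

lemma slot_corr_eq_rademacher_sum:
  assumes "j \<in> group_slots m k"
  shows "slot_corr g j = clip ((\<Sum>w\<in>{k} \<times> (nbhd G (s j) \<inter> {..<n}). rad (g w)) / D)"
proof -
  have "{k} \<times> (nbhd G (s j) \<inter> {..<n}) = Pair k ` (nbhd G (s j) \<inter> {..<n})"
    by auto
  then have "(\<Sum>w\<in>{k} \<times> (nbhd G (s j) \<inter> {..<n}). rad (g w)) = (\<Sum>u\<in>nbhd G (s j) \<inter> {..<n}. rad (g (k, u)))"
    by (simp add: sum.reindex inj_on_def)
  then show ?thesis
    unfolding slot_corr_def nbhd_corr_def group_slots_div[OF assms] by simp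
qed

lemma integral_slot_corr:
  assumes "k < r" and "j \<in> group_slots m k"
  shows "measure_pmf.expectation (rademacher_pmf sign_indices) (\<lambda>g. slot_corr g j) = 0"
  unfolding slot_corr_eq_rademacher_sum[OF assms(2)]
  using assms(1) clip_minus by (intro integral_odd_rademacher_sum[where \<phi>="\<lambda>z. clip (z / D)"]) auto

text \<open>Nodes with disjoint neighbourhoods use disjoint sets of signs.\<close>

lemma abs_integral_slot_corr_mult_le:
  assumes "k < r" and "a \<in> group_slots m k" and "b \<in> group_slots m k"
  shows "\<bar>measure_pmf.expectation (rademacher_pmf sign_indices) (\<lambda>g. slot_corr g a * slot_corr g b)\<bar> \<le>
         nbhd_overlap G (s a) (s b)"
proof (cases "nbhd G (s a) \<inter> nbhd G (s b) = {}")
  case True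
  let ?U = "{k} \<times> (nbhd G (s a) \<inter> {..<n})" and ?V = "{k} \<times> (nbhd G (s b) \<inter> {..<n})"
  have "measure_pmf.expectation (rademacher_pmf sign_indices) (\<lambda>g. slot_corr g a * slot_corr g b) =
    measure_pmf.expectation (rademacher_pmf sign_indices) (\<lambda>g. slot_corr g a) *
    measure_pmf.expectation (rademacher_pmf sign_indices) (\<lambda>g. slot_corr g b)"
    unfolding rademacher_pmf_def
  proof (rule integral_Pi_pmf_mult_disjoint[where U="?U" and V="?V" and BF=1 and BH=1])
    show "slot_corr x a = slot_corr x' a" if "\<And>i. i \<in> ?U \<Longrightarrow> x i = x' i" for x x'
      unfolding slot_corr_eq_rademacher_sum[OF assms(2)] using that by (intro arg_cong[where f="\<lambda>z. clip (z / D)"] sum.cong) auto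
    show "slot_corr x b = slot_corr x' b" if "\<And>i. i \<in> ?V \<Longrightarrow> x i = x' i" for x x'
      unfolding slot_corr_eq_rademacher_sum[OF assms(3)] using that by (intro arg_cong[where f="\<lambda>z. clip (z / D)"] sum.cong) auto
  qed (use assms(1) True abs_slot_corr_le in auto)
  then show ?thesis
    using integral_slot_corr[OF assms(1,2)] by (simp add: nbhd_overlap_def)
next
  case False
  have "\<bar>measure_pmf.expectation (rademacher_pmf sign_indices) (\<lambda>g. slot_corr g a * slot_corr g b)\<bar> \<le>
        measure_pmf.expectation (rademacher_pmf sign_indices) (\<lambda>g. 1)"
    using abs_slot_corr_le
    by (intro order_trans[OF integral_abs_bound] integral_mono) (auto simp: abs_mult intro: mult_le_one)
  then show ?thesis
    using False by (simp add: nbhd_overlap_def)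
qed

lemma abs_integral_group_mean_le:
  assumes "k < r"
  shows "\<bar>measure_pmf.expectation (rademacher_pmf sign_indices) (\<lambda>g. group_mean g k)\<bar> \<le>
         \<beta>\<^sup>2 / m\<^sup>2 * (\<Sum>a\<in>left_slots m k. \<Sum>b\<in>right_slots m k. nbhd_overlap G (s a) (s b))"
proof -
  let ?E = "measure_pmf.expectation (rademacher_pmf sign_indices)"
  have "group_mean g k = \<beta>\<^sup>2 / m\<^sup>2 * (\<Sum>a\<in>left_slots m k. \<Sum>b\<in>right_slots m k. slot_corr g a * slot_corr g b)" for g
    by (simp add: group_mean_def sum_product power2_eq_square sum_distrib_left[symmetric])
  then have "\<bar>?E (\<lambda>g. group_mean g k)\<bar> =
      \<beta>\<^sup>2 / m\<^sup>2 * \<bar>\<Sum>a\<in>left_slots m k. \<Sum>b\<in>right_slots m k. ?E (\<lambda>g. slot_corr g a * slot_corr g b)\<bar>"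
    by (simp add: abs_mult)
  also have "\<dots> \<le> \<beta>\<^sup>2 / m\<^sup>2 * (\<Sum>a\<in>left_slots m k. \<Sum>b\<in>right_slots m k. \<bar>?E (\<lambda>g. slot_corr g a * slot_corr g b)\<bar>)"
    by (intro mult_left_mono order_trans[OF sum_abs] sum_mono sum_abs) simp
  also have "\<dots> \<le> \<beta>\<^sup>2 / m\<^sup>2 * (\<Sum>a\<in>left_slots m k. \<Sum>b\<in>right_slots m k. nbhd_overlap G (s a) (s b))"
    using left_right_slots_subset[of m k]
    by (intro mult_left_mono sum_mono abs_integral_slot_corr_mult_le[OF assms]) auto
  finally show ?thesis .
qed

text \<open>In a starpartite graph every sampled node outside \<open>T\<close> has neighbourhood \<open>T\<close>,
  so all slots of a group see the same correlation.\<close>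

lemma group_mean_starpartite:
  assumes "T \<subseteq> {..<n}" and "G = starpartite n T" and "\<forall>j<S. s j \<notin> T" and "k < r"
  shows "group_mean g k = \<beta>\<^sup>2 * clip ((\<Sum>w\<in>{k} \<times> T. rad (g w)) / D) ^ 2"
proof -
  let ?q = "clip ((\<Sum>w\<in>{k} \<times> T. rad (g w)) / D)"
  have "slot_corr g j = ?q" if "j \<in> group_slots m k" for j
  proof -
    have "j < S"
      using group_slots_subset[OF assms(4)] that by auto
    then have "nbhd G (s j) = T"
      unfolding assms(2) using assms(1,3) s_less by (intro nbhd_starpartite) auto
    moreover have "T \<inter> {..<n} = T"
      using assms(1) by auto
    ultimately show ?thesis
      using slot_corr_eq_rademacher_sum[OF that] by simp
  qed
  then have "(\<Sum>j\<in>left_slots m k. \<beta> * slot_corr g j) = m * (\<beta> * ?q)"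
    and "(\<Sum>j\<in>right_slots m k. \<beta> * slot_corr g j) = m * (\<beta> * ?q)"
    using left_right_slots_subset[of m k] by (auto simp: subset_iff)
  then show ?thesis
    using m_pos by (simp add: group_mean_def power2_eq_square)
qed

lemma prob_stat_less_starpartite:
  assumes "T \<subseteq> {..<n}" and "G = starpartite n T" and "\<forall>j<S. s j \<notin> T"
    and "real (card T) = D\<^sup>2" and "1/m \<le> \<beta>\<^sup>2" and "r > 0" and "\<beta> > 0"
  shows "measure_pmf.prob joint {x. stat x < r * \<beta>\<^sup>2 / 8} \<le> 256 / r"
proof -
  define \<mu> where "\<mu> = (\<Sum>k<r. measure_pmf.expectation (rademacher_pmf sign_indices) (\<lambda>g. group_mean g k))"
  have "\<beta>\<^sup>2 / 4 \<le> measure_pmf.expectation (rademacher_pmf sign_indices) (\<lambda>g. group_mean g k)" if "k < r" for k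
  proof -
    have "1/4 \<le> measure_pmf.expectation (rademacher_pmf sign_indices) (\<lambda>g. clip ((\<Sum>w\<in>{k} \<times> T. rad (g w)) / D) ^ 2)"
      using assms(1,4) that D_pos by (intro integral_clip_rademacher_sum_square_ge) (auto simp: card_cartesian_product)
    then show ?thesis
      unfolding group_mean_starpartite[OF assms(1-3) that] using mult_left_mono[of "1/4" _ "\<beta>\<^sup>2"] by simp
  qed
  then have "r * \<beta>\<^sup>2 / 4 \<le> \<mu>"
    unfolding \<mu>_def using sum_mono[of "{..<r}" "\<lambda>_. \<beta>\<^sup>2 / 4"] by simp
  have "(1/m + \<beta>\<^sup>2)\<^sup>2 \<le> (2 * \<beta>\<^sup>2)\<^sup>2"
    using assms(5) by (intro power_mono) auto
  then have variance: "r * (1/m + \<beta>\<^sup>2)\<^sup>2 \<le> r * (4 * \<beta> ^ 4)"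
    by (intro mult_left_mono) (auto simp: power_mult_distrib)
  have "0 < r * \<beta>\<^sup>2"
    using assms(6,7) by simp
  then have "r * \<beta>\<^sup>2 / 8 < \<mu>"
    using \<open>r * \<beta>\<^sup>2 / 4 \<le> \<mu>\<close> by linarith
  then have "measure_pmf.prob joint {x. stat x < r * \<beta>\<^sup>2 / 8} \<le> r * (1/m + \<beta>\<^sup>2)\<^sup>2 / (\<mu> - r * \<beta>\<^sup>2 / 8)\<^sup>2"
    unfolding \<mu>_def by (intro prob_less_le_variance[OF abs_stat_le] integral_stat integral_stat_square_le)
  also have "\<dots> \<le> r * (4 * \<beta> ^ 4) / (r * \<beta>\<^sup>2 / 8)\<^sup>2"
    using variance \<open>r * \<beta>\<^sup>2 / 4 \<le> \<mu>\<close> assms(6,7) by (intro frac_le power_mono) auto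
  also have "\<dots> = 256 / r"
    using assms(6,7) by (simp add: field_simps power2_eq_square power4_eq_xxxx)
  finally show ?thesis .
qed

lemma square_sum_integral_group_mean_le:
  "(\<Sum>k<r. measure_pmf.expectation (rademacher_pmf sign_indices) (\<lambda>g. group_mean g k))\<^sup>2 \<le>
   \<beta> ^ 4 * r * slot_overlaps G m r s / m\<^sup>2"
proof -
  define e where "e k = measure_pmf.expectation (rademacher_pmf sign_indices) (\<lambda>g. group_mean g k)" for k
  have "slot_overlaps G m r s \<le> (\<Sum>k<r. \<Sum>a\<in>left_slots m k. \<Sum>b\<in>right_slots m k. 1)"
    unfolding slot_overlaps_def by (intro sum_mono) (simp add: nbhd_overlap_def)
  then have "slot_overlaps G m r s \<le> r * m\<^sup>2"
    by (simp add: power2_eq_square)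
  have "\<bar>\<Sum>k<r. e k\<bar> \<le> (\<Sum>k<r. \<bar>e k\<bar>)"
    by (rule sum_abs)
  also have "\<dots> \<le> (\<Sum>k<r. \<beta>\<^sup>2 / m\<^sup>2 * (\<Sum>a\<in>left_slots m k. \<Sum>b\<in>right_slots m k. nbhd_overlap G (s a) (s b)))"
    unfolding e_def by (intro sum_mono abs_integral_group_mean_le) simp
  also have "\<dots> = \<beta>\<^sup>2 / m\<^sup>2 * slot_overlaps G m r s"
    unfolding slot_overlaps_def by (rule sum_distrib_left[symmetric])
  finally have "(\<Sum>k<r. e k)\<^sup>2 \<le> (\<beta>\<^sup>2 / m\<^sup>2 * slot_overlaps G m r s)\<^sup>2"
    using power_mono[OF _ abs_ge_zero, where n=2] by fastforce
  also have "\<dots> = \<beta> ^ 4 * slot_overlaps G m r s / m\<^sup>2 * (slot_overlaps G m r s / m\<^sup>2)"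
    by (simp add: power2_eq_square power4_eq_xxxx)
  also have "\<dots> \<le> \<beta> ^ 4 * slot_overlaps G m r s / m\<^sup>2 * r"
    using \<open>slot_overlaps G m r s \<le> r * m\<^sup>2\<close> slot_overlaps_nonneg[of G m r s] m_pos
    by (intro mult_left_mono) (simp_all add: field_simps)
  finally show ?thesis
    by (simp add: e_def field_simps)
qed

lemma prob_stat_ge_le:
  assumes "1/m \<le> \<beta>\<^sup>2" and "r > 0" and "\<beta> > 0"
  shows "measure_pmf.prob joint {x. r * \<beta>\<^sup>2 / 8 \<le> stat x} \<le>
    256 / r + 64 * slot_overlaps G m r s / (real r * (real m)\<^sup>2)"
proof -
  have "(1/m + \<beta>\<^sup>2)\<^sup>2 \<le> (2 * \<beta>\<^sup>2)\<^sup>2"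
    using assms(1) by (intro power_mono) auto
  then have variance: "r * (1/m + \<beta>\<^sup>2)\<^sup>2 \<le> r * (4 * \<beta> ^ 4)"
    by (intro mult_left_mono) (auto simp: power_mult_distrib)
  have "{x. r * \<beta>\<^sup>2 / 8 \<le> stat x} \<subseteq> {x \<in> space (measure_pmf joint). r * \<beta>\<^sup>2 / 8 \<le> \<bar>stat x\<bar>}"
    by auto
  then have "measure_pmf.prob joint {x. r * \<beta>\<^sup>2 / 8 \<le> stat x} \<le>
             measure_pmf.prob joint {x \<in> space (measure_pmf joint). r * \<beta>\<^sup>2 / 8 \<le> \<bar>stat x\<bar>}"
    by (intro measure_pmf.finite_measure_mono) auto
  also have "\<dots> \<le> measure_pmf.expectation joint (\<lambda>x. stat x ^ 2) / (r * \<beta>\<^sup>2 / 8)\<^sup>2"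
    using assms(2,3) abs_stat_le power_mono[OF abs_stat_le abs_ge_zero, where n=2]
    by (intro measure_pmf.second_moment_method measure_pmf.integrable_const_bound[where B="r\<^sup>2"]) auto
  also have "\<dots> \<le> (r * (4 * \<beta> ^ 4) + \<beta> ^ 4 * r * slot_overlaps G m r s / m\<^sup>2) / (r * \<beta>\<^sup>2 / 8)\<^sup>2"
    using integral_stat_square_le variance square_sum_integral_group_mean_le by (intro divide_right_mono) auto
  also have "\<dots> = 256 / r + 64 * slot_overlaps G m r s / (real r * (real m)\<^sup>2)"
    using assms(2,3) m_pos by (simp add: field_simps power2_eq_square power4_eq_xxxx)
  finally show ?thesis .
qed

lemma reports_support:
  assumes "x \<in> set_pmf (reports g)" and "i < n"
  shows "sampled S s i \<Longrightarrow> \<exists>b. x i = encode_report (first_slot S s i) b"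
    and "\<not> sampled S s i \<Longrightarrow> x i = 0"
proof -
  have "x i \<in> set_pmf (local_report n m S \<beta> D s g i (nbhd G i))"
    using assms by (auto simp: report_pmf_def set_Pi_pmf PiE_dflt_def)
  then show "sampled S s i \<Longrightarrow> \<exists>b. x i = encode_report (first_slot S s i) b"
    and "\<not> sampled S s i \<Longrightarrow> x i = 0"
    by (auto simp: local_report_def)
qed

lemma slot_answer_eq_slot_sign:
  assumes "x \<in> set_pmf (reports g)" and "j < S"
  shows "slot_answer n x j = slot_sign j x"
proof -
  have answers: "(x i \<noteq> 0 \<and> (x i - 1) div 2 = j) \<longleftrightarrow> i = s j" if i_less: "i < n" for i
  proof (cases "sampled S s i")
    case True
    then obtain b where b: "x i = encode_report (first_slot S s i) b"
      using reports_support(1)[OF assms(1) i_less] by blast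
    from True obtain j' where "j' < S" and "s j' = i"
      by (auto simp: sampled_def)
    then have "first_slot S s i = j'"
      using first_slot_slot by blast
    then have "x i \<noteq> 0 \<and> (x i - 1) div 2 = j \<longleftrightarrow> j' = j"
      using b encode_report_decode by simp
    also have "\<dots> \<longleftrightarrow> i = s j"
      using \<open>j' < S\<close> \<open>s j' = i\<close> assms(2) inj_s by (auto dest: inj_onD)
    finally show ?thesis .
  next
    case False
    then show ?thesis
      using reports_support(2)[OF assms(1) i_less] assms(2) by (auto simp: sampled_def)
  qed
  have "slot_answer n x j = (\<Sum>i<n. if i = s j then report_sign (x i) else 0)"
    unfolding slot_answer_def
  proof (intro sum.cong refl)
    fix i
    assume "i \<in> {..<n}"
    then show "(if x i \<noteq> 0 \<and> (x i - 1) div 2 = j then report_sign (x i) else 0) =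
               (if i = s j then report_sign (x i) else 0)"
      by (simp only: answers lessThan_iff)
  qed
  also have "\<dots> = slot_sign j x"
    using s_less[OF assms(2)] by (simp add: slot_sign_def)
  finally show ?thesis .
qed

lemma test_statistic_eq_stat:
  assumes "x \<in> set_pmf (reports g)"
  shows "test_statistic n m r x = stat x"
  unfolding test_statistic_def stat_def group_stat_def half_mean_def
proof (intro sum.cong refl)
  fix k
  assume "k \<in> {..<r}"
  then have "left_slots m k \<subseteq> {..<S}" and "right_slots m k \<subseteq> {..<S}"
    using group_slots_subset[of k r m] left_right_slots_subset[of m k] by auto
  then show "(\<Sum>j\<in>left_slots m k. slot_answer n x j) / m * ((\<Sum>j\<in>right_slots m k. slot_answer n x j) / m) =
             (\<Sum>j\<in>left_slots m k. slot_sign j x) / m * ((\<Sum>j\<in>right_slots m k. slot_sign j x) / m)"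
    using slot_answer_eq_slot_sign[OF assms] by (auto intro!: arg_cong2[where f="(*)"] sum.cong)
qed

lemma integral_prob_decide:
  "measure_pmf.expectation (rademacher_pmf sign_indices) (\<lambda>g. measure_pmf.prob (reports g) {x. decide n m r \<tau> x = L}) =
   measure_pmf.prob joint {x. (if \<tau> \<le> stat x then Starpartite else Regular) = L}"
proof -
  let ?A = "{x. (if \<tau> \<le> stat x then Starpartite else Regular) = L}"
  have "measure_pmf.prob (reports g) {x. decide n m r \<tau> x = L} = measure_pmf.prob (reports g) ?A" for g
  proof -
    have "measure_pmf.expectation (reports g) (\<lambda>x. indicator {x. decide n m r \<tau> x = L} x :: real) =
          measure_pmf.expectation (reports g) (\<lambda>x. indicator ?A x)"
      by (intro integral_pmf_cong_on_support) (simp add: decide_def test_statistic_eq_stat indicator_def)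
    then show ?thesis
      by simp
  qed
  then show ?thesis
    by (simp add: joint_def prob_bind_pmf)
qed


lemma prob_decide_starpartite_ge:
  assumes "T \<subseteq> {..<n}" and "G = starpartite n T" and "\<forall>j<S. s j \<notin> T"
    and "real (card T) = D\<^sup>2" and "1/m \<le> \<beta>\<^sup>2" and "r > 0" and "\<beta> > 0"
  shows "1 - 256 / r \<le> measure_pmf.expectation (rademacher_pmf sign_indices)
           (\<lambda>g. measure_pmf.prob (reports g) {x. decide n m r (r * \<beta>\<^sup>2 / 8) x = Starpartite})"
  unfolding integral_prob_decide using prob_stat_less_starpartite[OF assms]
  by (simp add: prob_pmf_not flip: not_less)

lemma prob_decide_regular_ge:
  assumes "1/m \<le> \<beta>\<^sup>2" and "r > 0" and "\<beta> > 0"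
  shows "1 - 256 / r -
    64 * slot_overlaps G m r s / (real r * (real m)\<^sup>2)
    \<le> measure_pmf.expectation (rademacher_pmf sign_indices)
         (\<lambda>g. measure_pmf.prob (reports g) {x. decide n m r (r * \<beta>\<^sup>2 / 8) x = Regular})"
  unfolding integral_prob_decide using prob_stat_ge_le[OF assms]
  by (simp add: prob_pmf_not)
end

section \<open>Random slot maps\<close>

definition slot_pmf :: "nat \<Rightarrow> nat \<Rightarrow> (nat \<Rightarrow> nat) pmf" where
  "slot_pmf n S = Pi_pmf {..<S} 0 (\<lambda>_. pmf_of_set {..<n})"

lemma set_pmf_of_set_lessThan: "(n :: nat) > 0 \<Longrightarrow> set_pmf (pmf_of_set {..<n}) = {..<n}"
  by (rule set_pmf_of_set) auto

lemma slot_pmf_less: "n > 0 \<Longrightarrow> s \<in> set_pmf (slot_pmf n S) \<Longrightarrow> j < S \<Longrightarrow> s j < n"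
  by (auto simp: slot_pmf_def set_Pi_pmf PiE_dflt_def set_pmf_of_set_lessThan)

lemma finite_set_slot_pmf: "n > 0 \<Longrightarrow> finite (set_pmf (slot_pmf n S))"
  by (simp add: slot_pmf_def set_Pi_pmf finite_PiE_dflt set_pmf_of_set_lessThan)

lemma integral_slot_pmf_component:
  fixes F :: "nat \<Rightarrow> real"
  assumes "n > 0" and "a < S"
  shows "measure_pmf.expectation (slot_pmf n S) (\<lambda>s. F (s a)) = (\<Sum>x<n. F x) / n"
proof -
  have "measure_pmf.expectation (slot_pmf n S) (\<lambda>s. F (s a)) = measure_pmf.expectation (pmf_of_set {..<n}) F"
    unfolding slot_pmf_def using assms(2) by (intro integral_Pi_pmf_component) auto
  also have "\<dots> = (\<Sum>x<n. F x) / n"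
    using assms(1) by (subst integral_pmf_of_set) auto
  finally show ?thesis .
qed

lemma integral_slot_pmf_pair:
  fixes F :: "nat \<Rightarrow> nat \<Rightarrow> real"
  assumes "n > 0" and "a < S" and "b < S" and "a \<noteq> b" and "\<And>x y. \<bar>F x y\<bar> \<le> B"
  shows "measure_pmf.expectation (slot_pmf n S) (\<lambda>s. F (s a) (s b)) = (\<Sum>x<n. \<Sum>y<n. F x y) / n\<^sup>2"
proof -
  let ?E = "measure_pmf.expectation (slot_pmf n S)"
  let ?hit = "\<lambda>x s. if s a = x then 1 else 0 :: real"
  have "?E (\<lambda>s. F (s a) (s b)) = ?E (\<lambda>s. \<Sum>x<n. ?hit x s * F x (s b))"
  proof (rule integral_pmf_cong_on_support)
    fix s
    assume "s \<in> set_pmf (slot_pmf n S)"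
    then have "s a < n"
      using slot_pmf_less assms(1,2) by blast
    have "(\<Sum>x<n. ?hit x s * F x (s b)) = (\<Sum>x<n. if x = s a then F x (s b) else 0)"
      by (intro sum.cong) auto
    then show "F (s a) (s b) = (\<Sum>x<n. ?hit x s * F x (s b))"
      using \<open>s a < n\<close> by simp
  qed
  also have "\<dots> = (\<Sum>x<n. ?E (\<lambda>s. ?hit x s * F x (s b)))"
    using finite_set_slot_pmf[OF assms(1)] by (simp add: integrable_measure_pmf_finite)
  also have "\<dots> = (\<Sum>x<n. ?E (?hit x) * ?E (\<lambda>s. F x (s b)))"
    unfolding slot_pmf_def using assms
    by (intro sum.cong refl integral_Pi_pmf_mult_disjoint[where U="{a}" and V="{b}" and BF=1 and BH=B]) auto
  also have "\<dots> = (\<Sum>x<n. 1 / n * ((\<Sum>y<n. F x y) / n))"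
    using integral_slot_pmf_component[OF assms(1,2), of "\<lambda>z. if z = _ then 1 else 0"]
      integral_slot_pmf_component[OF assms(1,3)]
    by (intro sum.cong refl) (simp add: sum.delta')
  finally show ?thesis
    by (simp add: sum_divide_distrib power2_eq_square)
qed

definition slot_collisions :: "nat \<Rightarrow> (nat \<Rightarrow> nat) \<Rightarrow> real" where
  "slot_collisions S s = (\<Sum>j<S. \<Sum>j'\<in>{..<S} - {j}. if s j = s j' then 1 else 0)"

definition slot_hits :: "nat \<Rightarrow> nat set \<Rightarrow> (nat \<Rightarrow> nat) \<Rightarrow> real" where
  "slot_hits S T s = (\<Sum>j<S. if s j \<in> T then 1 else 0)"

lemma slot_collisions_nonneg: "0 \<le> slot_collisions S s"
  unfolding slot_collisions_def by (intro sum_nonneg) auto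

lemma slot_hits_nonneg: "0 \<le> slot_hits S T s"
  unfolding slot_hits_def by (intro sum_nonneg) auto

lemma one_le_slot_collisions:
  assumes "\<not> inj_on s {..<S}"
  shows "1 \<le> slot_collisions S s"
proof -
  obtain j j' where "j < S" "j' < S" "j \<noteq> j'" "s j = s j'"
    using assms by (auto simp: inj_on_def)
  then have "1 \<le> (\<Sum>j'\<in>{..<S} - {j}. if s j = s j' then 1 else 0 :: real)"
    using member_le_sum[of j' "{..<S} - {j}" "\<lambda>j'. if s j = s j' then 1 else 0 :: real"] by auto
  also have "\<dots> \<le> slot_collisions S s"
    unfolding slot_collisions_def using \<open>j < S\<close>
    by (intro member_le_sum[where f="\<lambda>j. \<Sum>j'\<in>{..<S} - {j}. if s j = s j' then 1 else 0 :: real"] sum_nonneg) auto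
  finally show ?thesis .
qed

lemma one_le_slot_hits: "j < S \<Longrightarrow> s j \<in> T \<Longrightarrow> 1 \<le> slot_hits S T s"
  unfolding slot_hits_def by (rule order_trans[OF _ member_le_sum[where i=j]]) auto

lemma integral_slot_collisions_le:
  assumes "n > 0"
  shows "measure_pmf.expectation (slot_pmf n S) (slot_collisions S) \<le> real S ^ 2 / n"
proof -
  have "measure_pmf.expectation (slot_pmf n S) (slot_collisions S) =
        (\<Sum>j<S. \<Sum>j'\<in>{..<S} - {j}. measure_pmf.expectation (slot_pmf n S) (\<lambda>s. if s j = s j' then 1 else 0))"
    unfolding slot_collisions_def using finite_set_slot_pmf[OF assms] by (simp add: integrable_measure_pmf_finite)
  also have "\<dots> = (\<Sum>j<S. \<Sum>j'\<in>{..<S} - {j}. 1 / n)"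
  proof (intro sum.cong refl)
    fix j j'
    assume "j \<in> {..<S}" and "j' \<in> {..<S} - {j}"
    then have "measure_pmf.expectation (slot_pmf n S) (\<lambda>s. if s j = s j' then 1 else 0) =
               (\<Sum>x<n. \<Sum>y<n. if x = y then 1 else 0 :: real) / n\<^sup>2"
      using assms by (intro integral_slot_pmf_pair[where B=1]) auto
    then show "measure_pmf.expectation (slot_pmf n S) (\<lambda>s. if s j = s j' then 1 else 0) = 1 / n"
      using assms by (simp add: power2_eq_square)
  qed
  also have "\<dots> \<le> (\<Sum>j<S. \<Sum>j'<S. 1 / n)"
    by (intro sum_mono sum_mono2) auto
  finally show ?thesis
    by (simp add: power2_eq_square)
qed

lemma integral_slot_hits:
  assumes "n > 0" and "T \<subseteq> {..<n}"
  shows "measure_pmf.expectation (slot_pmf n S) (slot_hits S T) = real S * card T / n"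
proof -
  have "measure_pmf.expectation (slot_pmf n S) (slot_hits S T) =
        (\<Sum>j<S. measure_pmf.expectation (slot_pmf n S) (\<lambda>s. if s j \<in> T then 1 else 0))"
    unfolding slot_hits_def using finite_set_slot_pmf[OF assms(1)] by (simp add: integrable_measure_pmf_finite)
  also have "\<dots> = (\<Sum>j<S. (\<Sum>x<n. if x \<in> T then 1 else 0) / n)"
    using integral_slot_pmf_component[OF assms(1), of _ S "\<lambda>x. if x \<in> T then 1 else 0"] by simp
  also have "(\<Sum>x<n. if x \<in> T then 1 else 0 :: real) = card T"
    using assms(2) by (simp add: sum.If_cases Int_absorb1)
  finally show ?thesis
    by simp
qed

lemma integral_slot_overlaps_le:
  assumes "n > 0" and "G \<in> regular_graphs n t"
  shows "measure_pmf.expectation (slot_pmf n (2 * r * m)) (slot_overlaps G m r) \<le> real r * (real m)\<^sup>2 * (real t)\<^sup>2 / n"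
proof -
  have "measure_pmf.expectation (slot_pmf n (2 * r * m)) (slot_overlaps G m r) =
        (\<Sum>k<r. \<Sum>a\<in>left_slots m k. \<Sum>b\<in>right_slots m k.
           measure_pmf.expectation (slot_pmf n (2 * r * m)) (\<lambda>s. nbhd_overlap G (s a) (s b)))"
    unfolding slot_overlaps_def using finite_set_slot_pmf[OF assms(1)] by (simp add: integrable_measure_pmf_finite)
  also have "\<dots> \<le> (\<Sum>k<r. \<Sum>a\<in>left_slots m k. \<Sum>b\<in>right_slots m k. (real t)\<^sup>2 / real n)"
  proof (intro sum_mono)
    fix k a b
    assume "k \<in> {..<r}" and "a \<in> left_slots m k" and "b \<in> right_slots m k"
    then have "a < 2 * r * m" "b < 2 * r * m" "a \<noteq> b"
      using group_slots_subset[of k r m] left_right_slots_subset[of m k] left_right_slots_disjoint[of m k] by auto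
    then have "measure_pmf.expectation (slot_pmf n (2 * r * m)) (\<lambda>s. nbhd_overlap G (s a) (s b)) =
               (\<Sum>x<n. \<Sum>y<n. nbhd_overlap G x y) / n\<^sup>2"
      using assms(1) by (intro integral_slot_pmf_pair[where B=1]) (auto simp: nbhd_overlap_def)
    also have "\<dots> \<le> n * t\<^sup>2 / n\<^sup>2"
      using sum_nbhd_overlap_le[OF assms(2)] by (simp add: divide_right_mono)
    also have "\<dots> = (real t)\<^sup>2 / real n"
      by (simp add: power2_eq_square)
    finally show "measure_pmf.expectation (slot_pmf n (2 * r * m)) (\<lambda>s. nbhd_overlap G (s a) (s b)) \<le> (real t)\<^sup>2 / real n" .
  qed
  also have "\<dots> = real r * (real m)\<^sup>2 * (real t)\<^sup>2 / real n"
    by (simp add: power2_eq_square)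
  finally show ?thesis .
qed

text \<open>Public strings are natural numbers, so \<open>(s, g)\<close> is encoded via lists of its relevant values.\<close>

definition encode_public :: "nat \<Rightarrow> nat \<Rightarrow> nat \<Rightarrow> (nat \<Rightarrow> nat) \<times> (nat \<times> nat \<Rightarrow> bool) \<Rightarrow> nat" where
  "encode_public n S r z = to_nat (map (fst z) [0..<S], map (\<lambda>k. map (\<lambda>u. snd z (k, u)) [0..<n]) [0..<r])"

definition decode_slots :: "nat \<Rightarrow> nat \<Rightarrow> nat" where
  "decode_slots \<rho> j = fst (from_nat \<rho> :: nat list \<times> bool list list) ! j"

definition decode_signs :: "nat \<Rightarrow> nat \<times> nat \<Rightarrow> bool" where
  "decode_signs \<rho> ku = snd (from_nat \<rho> :: nat list \<times> bool list list) ! fst ku ! snd ku"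

definition public_pmf :: "nat \<Rightarrow> nat \<Rightarrow> nat \<Rightarrow> nat pmf" where
  "public_pmf n m r =
     map_pmf (encode_public n (2 * r * m) r) (pair_pmf (slot_pmf n (2 * r * m)) (rademacher_pmf ({..<r} \<times> {..<n})))"

definition randomizer :: "nat \<Rightarrow> nat \<Rightarrow> nat \<Rightarrow> real \<Rightarrow> nat \<Rightarrow> nat \<Rightarrow> nat set \<Rightarrow> nat pmf" where
  "randomizer n m r \<beta> \<rho> i N =
     local_report n m (2 * r * m) \<beta> (real (2 * r * m)) (decode_slots \<rho>) (decode_signs \<rho>) i N"

lemma local_report_cong:
  assumes "m > 0" and "\<And>j. j < 2 * r * m \<Longrightarrow> s j = s' j"
    and "\<And>k u. k < r \<Longrightarrow> u < n \<Longrightarrow> g (k, u) = g' (k, u)"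
  shows "local_report n m (2 * r * m) \<beta> D s g i N = local_report n m (2 * r * m) \<beta> D s' g' i N"
proof -
  have "sampled (2 * r * m) s i = sampled (2 * r * m) s' i"
    using assms(2) by (auto simp: sampled_def)
  moreover have "first_slot (2 * r * m) s i = first_slot (2 * r * m) s' i"
    unfolding first_slot_def by (rule arg_cong[where f=Least]) (use assms(2) in auto)
  moreover have "nbhd_corr n D g (first_slot (2 * r * m) s i div (2 * m)) N =
                 nbhd_corr n D g' (first_slot (2 * r * m) s i div (2 * m)) N"
    if "sampled (2 * r * m) s i"
  proof -
    have "first_slot (2 * r * m) s i < 2 * r * m"
      using that unfolding first_slot_def sampled_def by (auto intro: LeastI2_ex)
    then have "first_slot (2 * r * m) s i div (2 * m) < r"
      using assms(1) by (simp add: div_less_iff_less_mult ac_simps)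
    then show ?thesis
      unfolding nbhd_corr_def using assms(3)
      by (intro arg_cong[where f=clip] arg_cong[where f="\<lambda>z. z / D"] sum.cong) auto
  qed
  ultimately show ?thesis
    by (simp add: local_report_def)
qed

lemma randomizer_encode_public:
  "m > 0 \<Longrightarrow> randomizer n m r \<beta> (encode_public n (2 * r * m) r z) =
     local_report n m (2 * r * m) \<beta> (real (2 * r * m)) (fst z) (snd z)"
  unfolding randomizer_def
  by (intro ext local_report_cong) (auto simp: decode_slots_def decode_signs_def encode_public_def)

lemma randomizer_LNDP:
  assumes "0 \<le> \<beta>" and "\<beta> \<le> 1/2" and "6 * \<beta> \<le> \<epsilon>" and "0 \<le> \<delta>" and "m > 0" and "r > 0"
  shows "LNDP n \<epsilon> \<delta> Rho (randomizer n m r \<beta>)"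
  unfolding LNDP_def
proof (intro ballI allI impI)
  fix \<rho> G G'
  assume "node_neighbors n G G'"
  then obtain v where "\<forall>e. v \<notin> e \<longrightarrow> (e \<in> G \<longleftrightarrow> e \<in> G')"
    by (auto simp: node_neighbors_def)
  have "0 < real (2 * r * m)" and "4 * \<beta> + 2 * \<beta> * (2 * r * m) / (2 * r * m) = 6 * \<beta>"
    using assms by auto
  then have one_way: "measure_pmf.prob (rand_outputs n (randomizer n m r \<beta>) \<rho> H) A \<le>
      exp \<epsilon> * measure_pmf.prob (rand_outputs n (randomizer n m r \<beta>) \<rho> H') A + \<delta>"
    if "\<forall>e. v \<notin> e \<longrightarrow> (e \<in> H \<longleftrightarrow> e \<in> H')" for H H' A
  proof -
    have "pmf (rand_outputs n (randomizer n m r \<beta>) \<rho> H) x \<le>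
          exp (6 * \<beta>) * pmf (rand_outputs n (randomizer n m r \<beta>) \<rho> H') x" for x
      using pmf_Pi_local_report_le[OF assms(1,2) \<open>0 < real (2 * r * m)\<close> that,
          where S="2 * r * m" and s="decode_slots \<rho>" and g="decode_signs \<rho>" and x=x and n=n and m=m]
        \<open>4 * \<beta> + 2 * \<beta> * (2 * r * m) / (2 * r * m) = 6 * \<beta>\<close>
      unfolding rand_outputs_def randomizer_def report_pmf_def by simp
    then have "measure_pmf.prob (rand_outputs n (randomizer n m r \<beta>) \<rho> H) A \<le>
          exp (6 * \<beta>) * measure_pmf.prob (rand_outputs n (randomizer n m r \<beta>) \<rho> H') A"
      by (rule prob_le_of_pmf_le) simp
    also have "\<dots> \<le> exp \<epsilon> * measure_pmf.prob (rand_outputs n (randomizer n m r \<beta>) \<rho> H') A"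
      using assms(3) by (intro mult_right_mono) auto
    finally show ?thesis
      using assms(4) by linarith
  qed
  show "indist \<epsilon> \<delta> (rand_outputs n (randomizer n m r \<beta>) \<rho> G) (rand_outputs n (randomizer n m r \<beta>) \<rho> G')"
    unfolding indist_def using one_way \<open>\<forall>e. v \<notin> e \<longrightarrow> (e \<in> G \<longleftrightarrow> e \<in> G')\<close> by auto
qed

lemma prob_alg_out:
  assumes "m > 0"
  shows "measure_pmf.prob (alg_out n (public_pmf n m r) (randomizer n m r \<beta>) P G) {L} =
    measure_pmf.expectation (slot_pmf n (2 * r * m)) (\<lambda>s. measure_pmf.expectation (rademacher_pmf ({..<r} \<times> {..<n}))
      (\<lambda>g. measure_pmf.prob (report_pmf n m (2 * r * m) \<beta> (real (2 * r * m)) s G g)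
             {x. P x = L}))"
proof -
  have "measure_pmf.prob (alg_out n (public_pmf n m r) (randomizer n m r \<beta>) P G) {L} =
    measure_pmf.expectation (pair_pmf (slot_pmf n (2 * r * m)) (rademacher_pmf ({..<r} \<times> {..<n})))
      (\<lambda>z. measure_pmf.prob (report_pmf n m (2 * r * m) \<beta> (real (2 * r * m)) (fst z) G (snd z))
             {x. P x = L})"
    unfolding alg_out_def prob_bind_pmf public_pmf_def rand_outputs_def report_pmf_def
    by (simp add: randomizer_encode_public[OF assms] split_beta vimage_def)
  also have "\<dots> = measure_pmf.expectation (slot_pmf n (2 * r * m)) (\<lambda>s. measure_pmf.expectation (rademacher_pmf ({..<r} \<times> {..<n}))
      (\<lambda>g. measure_pmf.prob (report_pmf n m (2 * r * m) \<beta> (real (2 * r * m)) s G g)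
             {x. P x = L}))"
    by (subst integral_pair_pmf_bounded[where B=1]) simp_all
  finally show ?thesis .
qed

section \<open>Correctness\<close>

lemma prob_alg_out_starpartite_ge:
  assumes "m > 0" and "r > 0" and "0 < \<beta>" and "\<beta> \<le> 1/2" and "1/m \<le> \<beta>\<^sup>2" and "n > 0"
    and "T \<subseteq> {..<n}" and "real (card T) = real (2 * r * m) ^ 2"
  shows "1 - 256 / r - real (2 * r * m) ^ 2 / n - real (2 * r * m) * card T / n \<le>
    measure_pmf.prob (alg_out n (public_pmf n m r) (randomizer n m r \<beta>) (decide n m r (r * \<beta>\<^sup>2 / 8)) (starpartite n T))
      {Starpartite}"
proof -
  define slots where "slots = 2 * r * m"
  define f where "f s = measure_pmf.expectation (rademacher_pmf ({..<r} \<times> {..<n})) (\<lambda>g. measure_pmf.prob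
    (report_pmf n m (2 * r * m) \<beta> (real (2 * r * m)) s (starpartite n T) g) {x. decide n m r (r * \<beta>\<^sup>2 / 8) x = Starpartite})"
    for s
  have "1 - 256 / r \<le> f s"
    if "s \<in> set_pmf (slot_pmf n slots)" and "inj_on s {..<slots} \<and> (\<forall>j<slots. s j \<notin> T)" for s
  proof -
    interpret injective_sample n m r \<beta> "real (2 * r * m)" s "starpartite n T"
      using assms(1-4,6) that slot_pmf_less by unfold_locales (auto simp: slots_def)
    show ?thesis
      unfolding f_def using prob_decide_starpartite_ge[OF assms(7) refl _ assms(8) assms(5,2,3)] that(2)
      by (simp add: slots_def)
  qed
  moreover have "1 \<le> slot_collisions slots s + slot_hits slots T s"
    if "\<not> (inj_on s {..<slots} \<and> (\<forall>j<slots. s j \<notin> T))" for s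
    using that one_le_slot_collisions[of s slots] one_le_slot_hits[of _ slots s T]
      slot_collisions_nonneg[of slots s] slot_hits_nonneg[of slots T s] by force
  ultimately have "1 - measure_pmf.expectation (slot_pmf n slots) (\<lambda>_. 256 / r) -
             measure_pmf.expectation (slot_pmf n slots) (\<lambda>s. slot_collisions slots s + slot_hits slots T s) \<le>
             measure_pmf.expectation (slot_pmf n slots) f"
    unfolding f_def
    by (intro integral_ge_of_failure_count[OF finite_set_slot_pmf[OF assms(6)]] add_nonneg_nonneg
        slot_collisions_nonneg slot_hits_nonneg Bochner_Integration.integral_nonneg measure_nonneg) auto
  moreover have "measure_pmf.expectation (slot_pmf n slots) (\<lambda>s. slot_collisions slots s + slot_hits slots T s) \<le>
                 real slots ^ 2 / n + real slots * card T / n"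
    using integral_slot_collisions_le[OF assms(6), of slots] integral_slot_hits[OF assms(6,7), of slots]
      finite_set_slot_pmf[OF assms(6)] by (simp add: integrable_measure_pmf_finite)
  moreover have "measure_pmf.prob (alg_out n (public_pmf n m r) (randomizer n m r \<beta>) (decide n m r (r * \<beta>\<^sup>2 / 8)) (starpartite n T))
      {Starpartite} = measure_pmf.expectation (slot_pmf n slots) f"
    unfolding f_def slots_def by (rule prob_alg_out[OF assms(1)])
  ultimately show ?thesis
    by (simp add: slots_def)
qed

lemma prob_alg_out_regular_ge:
  assumes "m > 0" and "r > 0" and "0 < \<beta>" and "\<beta> \<le> 1/2" and "1/m \<le> \<beta>\<^sup>2" and "n > 0"
    and "G \<in> regular_graphs n t"
  shows "1 - 256 / r - real (2 * r * m) ^ 2 / n - 64 * (real t)\<^sup>2 / n \<le>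
    measure_pmf.prob (alg_out n (public_pmf n m r) (randomizer n m r \<beta>) (decide n m r (r * \<beta>\<^sup>2 / 8)) G) {Regular}"
proof -
  define slots where "slots = 2 * r * m"
  define h where "h s = 256 / r + 64 / (real r * (real m)\<^sup>2) * slot_overlaps G m r s" for s
  define f where "f s = measure_pmf.expectation (rademacher_pmf ({..<r} \<times> {..<n})) (\<lambda>g. measure_pmf.prob
    (report_pmf n m (2 * r * m) \<beta> (real (2 * r * m)) s G g) {x. decide n m r (r * \<beta>\<^sup>2 / 8) x = Regular})" for s
  have "1 - h s \<le> f s" if "s \<in> set_pmf (slot_pmf n slots)" and "inj_on s {..<slots}" for s
  proof -
    interpret injective_sample n m r \<beta> "real (2 * r * m)" s G
      using assms(1-4,6) that slot_pmf_less by unfold_locales (auto simp: slots_def)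
    show ?thesis
      unfolding f_def h_def using prob_decide_regular_ge[OF assms(5,2,3)] by simp
  qed
  then have "1 - measure_pmf.expectation (slot_pmf n slots) h - measure_pmf.expectation (slot_pmf n slots) (slot_collisions slots)
             \<le> measure_pmf.expectation (slot_pmf n slots) f"
    unfolding f_def h_def using one_le_slot_collisions
    by (intro integral_ge_of_failure_count[OF finite_set_slot_pmf[OF assms(6)]] add_nonneg_nonneg mult_nonneg_nonneg
        slot_overlaps_nonneg slot_collisions_nonneg Bochner_Integration.integral_nonneg measure_nonneg) auto
  moreover have "measure_pmf.expectation (slot_pmf n slots) h \<le> 256 / r + 64 * (real t)\<^sup>2 / n"
  proof -
    have "measure_pmf.expectation (slot_pmf n slots) h =
          256 / r + 64 / (real r * (real m)\<^sup>2) * measure_pmf.expectation (slot_pmf n slots) (slot_overlaps G m r)"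
      unfolding h_def using finite_set_slot_pmf[OF assms(6)] by (simp add: integrable_measure_pmf_finite)
    also have "\<dots> \<le> 256 / r + 64 / (real r * (real m)\<^sup>2) * (real r * (real m)\<^sup>2 * (real t)\<^sup>2 / n)"
      using integral_slot_overlaps_le[OF assms(6,7), of r m] unfolding slots_def by (intro add_left_mono mult_left_mono) auto
    also have "\<dots> = 256 / r + 64 * (real t)\<^sup>2 / n"
      using assms(1,2) by (simp add: field_simps)
    finally show ?thesis .
  qed
  moreover have "measure_pmf.expectation (slot_pmf n slots) (slot_collisions slots) \<le> real slots ^ 2 / n"
    by (rule integral_slot_collisions_le[OF assms(6)])
  moreover have "measure_pmf.prob (alg_out n (public_pmf n m r) (randomizer n m r \<beta>) (decide n m r (r * \<beta>\<^sup>2 / 8)) G)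
      {Regular} = measure_pmf.expectation (slot_pmf n slots) f"
    unfolding f_def slots_def by (rule prob_alg_out[OF assms(1)])
  ultimately show ?thesis
    by (simp add: slots_def)
qed

lemma error_terms_small:
  fixes X :: real and n :: nat
  assumes "1 \<le> X" and "1000 * X ^ 4 \<le> n"
  shows "n > 0" and "X\<^sup>2 / n \<le> 1/1000" and "X ^ 3 / n \<le> 1/1000" and "X ^ 4 / n \<le> 1/1000"
proof -
  have powers: "X\<^sup>2 \<le> X ^ 4" "X ^ 3 \<le> X ^ 4" "1 \<le> X ^ 4"
    using assms(1) by (simp_all add: power_increasing one_le_power)
  then show "n > 0"
    using assms(2) by simp
  show "X ^ 4 / n \<le> 1/1000"
    using assms(2) \<open>n > 0\<close> by (simp add: field_simps)
  moreover have "X\<^sup>2 / n \<le> X ^ 4 / n" and "X ^ 3 / n \<le> X ^ 4 / n"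
    using powers by (simp_all add: divide_right_mono)
  ultimately show "X\<^sup>2 / n \<le> 1/1000" and "X ^ 3 / n \<le> 1/1000"
    by linarith+
qed

lemma two_thirds_le_prob_starpartite:
  assumes "m > 0" and "2048 \<le> r" and "0 < \<beta>" and "\<beta> \<le> 1/2" and "1/m \<le> \<beta>\<^sup>2"
    and "1000 * real (2 * r * m) ^ 4 \<le> n" and "G \<in> starpartite_graphs n ((2 * r * m)\<^sup>2)"
  shows "2/3 \<le> measure_pmf.prob (alg_out n (public_pmf n m r) (randomizer n m r \<beta>) (decide n m r (r * \<beta>\<^sup>2 / 8)) G)
           {Starpartite}"
proof -
  define X where "X = real (2 * r * m)"
  have "1 \<le> 2 * r * m"
    using assms(1,2) by (simp add: Suc_le_eq)
  then have "1 \<le> X"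
    unfolding X_def by (metis of_nat_1 of_nat_le_iff)
  note small = error_terms_small[OF this assms(6)[folded X_def]]
  obtain T where "G = starpartite n T" "T \<subseteq> {..<n}" "real (card T) = X\<^sup>2"
    using assms(7) by (auto simp: starpartite_graphs_def X_def)
  then have "1 - 256 / r - X\<^sup>2 / n - X * X\<^sup>2 / n \<le>
      measure_pmf.prob (alg_out n (public_pmf n m r) (randomizer n m r \<beta>) (decide n m r (r * \<beta>\<^sup>2 / 8)) G) {Starpartite}"
    using prob_alg_out_starpartite_ge[OF assms(1) _ assms(3-5) small(1)] assms(2) by (simp add: X_def)
  moreover have "X * X\<^sup>2 / n = X ^ 3 / n" and "256 / r \<le> 1/8"
    using assms(2) by (simp_all add: power2_eq_square power3_eq_cube field_simps)
  ultimately show ?thesis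
    using small by linarith
qed

lemma two_thirds_le_prob_regular:
  assumes "m > 0" and "2048 \<le> r" and "0 < \<beta>" and "\<beta> \<le> 1/2" and "1/m \<le> \<beta>\<^sup>2"
    and "1000 * real (2 * r * m) ^ 4 \<le> n" and "G \<in> regular_graphs n ((2 * r * m)\<^sup>2)"
  shows "2/3 \<le> measure_pmf.prob (alg_out n (public_pmf n m r) (randomizer n m r \<beta>) (decide n m r (r * \<beta>\<^sup>2 / 8)) G)
           {Regular}"
proof -
  define X where "X = real (2 * r * m)"
  have "1 \<le> 2 * r * m"
    using assms(1,2) by (simp add: Suc_le_eq)
  then have "1 \<le> X"
    unfolding X_def by (metis of_nat_1 of_nat_le_iff)
  note small = error_terms_small[OF this assms(6)[folded X_def]]
  have "1 - 256 / r - X\<^sup>2 / n - 64 * (real ((2 * r * m)\<^sup>2))\<^sup>2 / n \<le>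
      measure_pmf.prob (alg_out n (public_pmf n m r) (randomizer n m r \<beta>) (decide n m r (r * \<beta>\<^sup>2 / 8)) G) {Regular}"
    using prob_alg_out_regular_ge[OF assms(1) _ assms(3-5) small(1) assms(7)] assms(2) by (simp add: X_def)
  moreover have "64 * (real ((2 * r * m)\<^sup>2))\<^sup>2 / n = 64 * (X ^ 4 / n)" and "256 / r \<le> 1/8"
    using assms(2) by (simp_all add: X_def power2_eq_square power4_eq_xxxx field_simps)
  ultimately show ?thesis
    using small by linarith
qed

text \<open>With \<open>r = 2048\<close> groups and \<open>\<beta> = \<epsilon> / 8\<close> the tester is even \<open>(\<epsilon>, 0)\<close>-LNDP.\<close>

lemma tester_exists:
  fixes \<epsilon> \<delta> :: real and m n :: nat
  assumes "0 < \<epsilon>" and "\<epsilon> \<le> 1" and "0 \<le> \<delta>" and "64 / \<epsilon>\<^sup>2 \<le> m"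
    and "1000 * (4096 * real m) ^ 4 \<le> n" and "regular_graphs n ((4096 * m)\<^sup>2) \<noteq> {}"
  shows "\<exists>(Rho :: nat pmf) (R :: nat \<Rightarrow> nat \<Rightarrow> nat set \<Rightarrow> nat pmf) (P :: (nat \<Rightarrow> nat) \<Rightarrow> label).
           LNDP n \<epsilon> \<delta> Rho R \<and>
           2/3 \<le> measure_pmf.prob (bind_pmf (pmf_of_set (starpartite_graphs n ((4096 * m)\<^sup>2))) (alg_out n Rho R P))
             {Starpartite} \<and>
           2/3 \<le> measure_pmf.prob (bind_pmf (pmf_of_set (regular_graphs n ((4096 * m)\<^sup>2))) (alg_out n Rho R P))
             {Regular}"
proof -
  define \<beta> where "\<beta> = \<epsilon> / 8"
  have "0 < 64 / \<epsilon>\<^sup>2"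
    using assms(1) by simp
  then have "m > 0"
    using assms(4) by linarith
  have "1 / m \<le> \<beta>\<^sup>2" and "0 < \<beta>" and "\<beta> \<le> 1/2" and "6 * \<beta> \<le> \<epsilon>"
    using assms(1,2,4) \<open>m > 0\<close> by (auto simp: \<beta>_def field_simps power2_eq_square)
  have "(4096 * real m)\<^sup>2 \<le> (4096 * real m) ^ 4"
    using \<open>m > 0\<close> by (intro power_increasing) auto
  moreover have "0 \<le> (4096 * real m) ^ 4" and "real ((4096 * m)\<^sup>2) = (4096 * real m)\<^sup>2"
    by simp_all
  ultimately have "real ((4096 * m)\<^sup>2) \<le> real n"
    using assms(5) by linarith
  then have "(4096 * m)\<^sup>2 \<le> n"
    by (simp only: of_nat_le_iff)
  have "1000 * real (2 * 2048 * m) ^ 4 \<le> n" and "2 * 2048 * m = 4096 * m"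
    using assms(5) by simp_all
  then show ?thesis
    using randomizer_LNDP[OF less_imp_le[OF \<open>0 < \<beta>\<close>] \<open>\<beta> \<le> 1/2\<close> \<open>6 * \<beta> \<le> \<epsilon>\<close> assms(3) \<open>m > 0\<close>, of 2048 n]
      two_thirds_le_prob_starpartite[OF \<open>m > 0\<close> _ \<open>0 < \<beta>\<close> \<open>\<beta> \<le> 1/2\<close> \<open>1 / m \<le> \<beta>\<^sup>2\<close>, of 2048 n]
      two_thirds_le_prob_regular[OF \<open>m > 0\<close> _ \<open>0 < \<beta>\<close> \<open>\<beta> \<le> 1/2\<close> \<open>1 / m \<le> \<beta>\<^sup>2\<close>, of 2048 n]
      \<open>(4096 * m)\<^sup>2 \<le> n\<close> assms(6)
    by (intro exI conjI prob_bind_pmf_of_set_ge finite_starpartite_graphs finite_regular_graphs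
        starpartite_graphs_nonempty) auto
qed

lemma divide_power_le_mult_divide_power:
  fixes \<epsilon> a L :: real
  assumes "0 < \<epsilon>" and "\<epsilon> \<le> 1" and "0 \<le> a" and "1 \<le> L" and "i \<le> j"
  shows "a / \<epsilon> ^ i \<le> a * L ^ l / \<epsilon> ^ j"
proof -
  have "a / \<epsilon> ^ i \<le> a / \<epsilon> ^ j"
    using assms by (intro divide_left_mono power_decreasing) auto
  also have "\<dots> \<le> a * L ^ l / \<epsilon> ^ j"
    using assms by (intro divide_right_mono mult_le_cancel_left1[THEN iffD2]) (auto intro: one_le_power)
  finally show ?thesis .
qed

lemma nat_ceiling_bounds:
  fixes \<epsilon> :: real
  assumes "0 < \<epsilon>" and "\<epsilon> \<le> 1"
  shows "64 / \<epsilon>\<^sup>2 \<le> nat \<lceil>64 / \<epsilon>\<^sup>2\<rceil>" and "real (nat \<lceil>64 / \<epsilon>\<^sup>2\<rceil>) \<le> 65 / \<epsilon>\<^sup>2"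
proof -
  have "0 < \<epsilon>\<^sup>2" and "\<epsilon>\<^sup>2 \<le> 1"
    using assms by (auto simp: power_le_one)
  have "0 < real_of_int \<lceil>64 / \<epsilon>\<^sup>2\<rceil>"
    using \<open>0 < \<epsilon>\<^sup>2\<close> le_of_int_ceiling[of "64 / \<epsilon>\<^sup>2"] by simp
  then have m: "real (nat \<lceil>64 / \<epsilon>\<^sup>2\<rceil>) = real_of_int \<lceil>64 / \<epsilon>\<^sup>2\<rceil>"
    by simp
  show "64 / \<epsilon>\<^sup>2 \<le> nat \<lceil>64 / \<epsilon>\<^sup>2\<rceil>"
    unfolding m by (rule le_of_int_ceiling)
  have "real (nat \<lceil>64 / \<epsilon>\<^sup>2\<rceil>) \<le> 64 / \<epsilon>\<^sup>2 + 1"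
    unfolding m by (rule of_int_ceiling_le_add_one)
  also have "\<dots> \<le> 64 / \<epsilon>\<^sup>2 + 1 / \<epsilon>\<^sup>2"
    using \<open>0 < \<epsilon>\<^sup>2\<close> \<open>\<epsilon>\<^sup>2 \<le> 1\<close> by (intro add_left_mono) (simp add: le_divide_eq)
  also have "\<dots> = 65 / \<epsilon>\<^sup>2"
    by (simp add: add_divide_distrib[symmetric])
  finally show "real (nat \<lceil>64 / \<epsilon>\<^sup>2\<rceil>) \<le> 65 / \<epsilon>\<^sup>2" .
qed

lemma one_le_ln_inverse:
  fixes \<delta> :: real
  assumes "0 < \<delta>" and "\<delta> < 1/10"
  shows "1 \<le> ln (1 / \<delta>)"
proof -
  have "exp 1 \<le> (3 :: real)"
    by (rule exp_le)
  also have "\<dots> \<le> 1 / \<delta>"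
    using assms by (simp add: field_simps)
  finally show ?thesis
    using assms(1) by (simp add: ln_ge_iff)
qed

lemma tester_with_degree_bound:
  assumes "0 < eps" and "eps < 1/2" and "0 < delta" and "delta < 1/10"
  shows "\<exists>t :: nat. 0 < t \<and> real t \<le> 266240\<^sup>2 * (ln (1/delta)) ^ 5 / eps ^ 6 \<and>
        (\<forall>n :: nat. real n \<ge> 1000 * 266240 ^ 4 * (ln (1/delta)) ^ 10 / eps ^ 10 \<and> regular_graphs n t \<noteq> {} \<longrightarrow>
          (\<exists>(Rho :: nat pmf) (R :: nat \<Rightarrow> nat \<Rightarrow> nat set \<Rightarrow> nat pmf) (P :: (nat \<Rightarrow> nat) \<Rightarrow> label).
             LNDP n eps delta Rho R \<and>
             measure_pmf.prob (bind_pmf (pmf_of_set (starpartite_graphs n t)) (alg_out n Rho R P))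
               {Starpartite} \<ge> 2/3 \<and>
             measure_pmf.prob (bind_pmf (pmf_of_set (regular_graphs n t)) (alg_out n Rho R P))
               {Regular} \<ge> 2/3))"
proof -
  define m where "m = nat \<lceil>64 / eps\<^sup>2\<rceil>"
  have "64 / eps\<^sup>2 \<le> m" and "4096 * real m \<le> 266240 / eps\<^sup>2"
    using nat_ceiling_bounds[of eps] assms(1,2) unfolding m_def by auto
  moreover have "0 < 64 / eps\<^sup>2"
    using assms(1) by simp
  ultimately have "m > 0"
    by linarith
  note weaken = divide_power_le_mult_divide_power[OF assms(1) _ _ one_le_ln_inverse[OF assms(3,4)]]
  have "(4096 * real m)\<^sup>2 \<le> 266240\<^sup>2 / eps ^ 4"
    using power_mono[OF \<open>4096 * real m \<le> 266240 / eps\<^sup>2\<close>, of 2] by (simp add: power_divide flip: power_mult)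
  also have "\<dots> \<le> 266240\<^sup>2 * (ln (1/delta)) ^ 5 / eps ^ 6"
    using assms(2) by (intro weaken) auto
  finally have degree: "(4096 * real m)\<^sup>2 \<le> 266240\<^sup>2 * (ln (1/delta)) ^ 5 / eps ^ 6" .
  have "1000 * (4096 * real m) ^ 4 \<le> 1000 * 266240 ^ 4 / eps ^ 8"
    using power_mono[OF \<open>4096 * real m \<le> 266240 / eps\<^sup>2\<close>, of 4] by (simp add: power_divide flip: power_mult)
  also have "\<dots> \<le> 1000 * 266240 ^ 4 * (ln (1/delta)) ^ 10 / eps ^ 10"
    using assms(2) by (intro weaken) auto
  finally have size: "1000 * (4096 * real m) ^ 4 \<le> 1000 * 266240 ^ 4 * (ln (1/delta)) ^ 10 / eps ^ 10" .
  show ?thesis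
    using \<open>m > 0\<close> degree size \<open>64 / eps\<^sup>2 \<le> m\<close> assms
    by (intro exI[of _ "(4096 * m)\<^sup>2"] conjI allI impI tester_exists; (elim conjE)?) auto
qed

theorem theorem7p1:
  "\<exists>C c :: real. C > 0 \<and> c > 0 \<and>
    (\<forall>eps delta :: real. 0 < eps \<and> eps < 1/2 \<and> 0 < delta \<and> delta < 1/10 \<longrightarrow>
      (\<exists>t :: nat. 0 < t \<and> real t \<le> C * (ln (1/delta)) ^ 5 / eps ^ 6 \<and>
        (\<forall>n :: nat. real n \<ge> c * (ln (1/delta)) ^ 10 / eps ^ 10 \<and> regular_graphs n t \<noteq> {} \<longrightarrow>
          (\<exists>(Rho :: nat pmf) (R :: nat \<Rightarrow> nat \<Rightarrow> nat set \<Rightarrow> nat pmf) (P :: (nat \<Rightarrow> nat) \<Rightarrow> label).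
             LNDP n eps delta Rho R \<and>
             measure_pmf.prob (bind_pmf (pmf_of_set (starpartite_graphs n t)) (alg_out n Rho R P))
               {Starpartite} \<ge> 2/3 \<and>
             measure_pmf.prob (bind_pmf (pmf_of_set (regular_graphs n t)) (alg_out n Rho R P))
               {Regular} \<ge> 2/3))))"
  using tester_with_degree_bound by (intro exI[of _ "266240\<^sup>2"] exI[of _ "1000 * 266240 ^ 4"]) simp

end
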